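(* Let $X$ and $U$ be Hilbert spaces, let $A$ generate an analytic semigroup $\{S(t);t\geq0\}$ on $X$, with $D(A)$ endowed with the graph norm, and let $B\in\mathcal L(D(A),U)$ satisfy: for each $\tau>0$ there is $C(\tau)>0$ with $\int_0^\tau\|BS(t)u_0\|_U^2\,dt\leq C(\tau)\|u_0\|_X^2$ for all $u_0\in D(A)$; and there are positive constants $d,k$ such that for all $L\in(0,1]$ and $u_0\in D(A)$, $\|S(L)u_0\|_X^2\leq e^{d/L^k}\int_0^L\|BS(t)u_0\|_U^2\,dt$. Let $\rho\in(0,1)$ be the constant (depending only on the semigroup) such that, with some $K\geq1$, for every $u_0\in D(A)$ the function $g(t)=\|BS(t)u_0\|_U^2$ satisfies $|g^{(\beta)}(t)|\leq K(t-s)^{-2}\beta!(\rho(t-s))^{-\beta}\|S(s)u_0\|_X^2$ for all $\beta\in\mathbb N$ whenever $0<t-s\leq1$. Let $0\leq t_1<t_2$ with $t_2-t_1\leq1$, let $\eta\in(0,1)$, and let $E\subset[t_1,t_2]$ be a measurable set of positive measure with $|E\cap(t_1,t_2)|\geq\eta(t_2-t_1)$. Then there are constants $C=C(d,k,\rho,\eta,\|B\|_{\mathcal L(D(A),U)})>0$ and $\theta=\theta(\rho,\eta)\in(0,1)$ such that for every $u_0\in D(A)$, $u(t)=S(t)u_0$ satisfies $$\|u(t_2)\|_X\leq\Big(Ce^{\frac{C}{(t_2-t_1)^k}}\int_{t_1}^{t_2}\chi_E(t)\|Bu(t)\|_U\,dt\Big)^\theta\|u(t_1)\|_X^{1-\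theta}.$$
   Context: $\chi_E$ is the characteristic function of $E$ and $|E|$ its Lebesgue measure. Constants are independent of $u_0$, $t_1$, $t_2$ and $E$ beyond the listed dependence (and the fixed semigroup). *)

theory Defs
  imports "HOL-Analysis.Analysis"
begin

definition C0_semigroup :: "(real \<Rightarrow> 'a::real_normed_vector \<Rightarrow> 'a) \<Rightarrow> bool" where
  "C0_semigroup S \<longleftrightarrow>
     (\<forall>t\<ge>0. bounded_linear (S t)) \<and>
     S 0 = id \<and>
     (\<forall>t s. 0 \<le> t \<longrightarrow> 0 \<le> s \<longrightarrow> S (t + s) = S t \<circ> S s) \<and>
     (\<forall>x. continuous_on {0..} (\<lambda>t. S t x))"

definition gen_dom :: "(real \<Rightarrow> 'a::real_normed_vector \<Rightarrow> 'a) \<Rightarrow> 'a set" where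
  "gen_dom S = {x. \<exists>y. ((\<lambda>h. (S h x - x) /\<^sub>R h) \<longlongrightarrow> y) (at_right 0)}"

text \<open>The infinitesimal generator A (meaningful on gen_dom S).\<close>
definition gen :: "(real \<Rightarrow> 'a::real_normed_vector \<Rightarrow> 'a) \<Rightarrow> 'a \<Rightarrow> 'a" where
  "gen S x = Lim (at_right 0) (\<lambda>h. (S h x - x) /\<^sub>R h)"

text \<open>Analytic semigroup (real setting; Pazy, Thm 2.5.2(d)):
  a C0 semigroup with S(t) X \<subseteq> D(A) for t > 0 and \<parallel>A S(t)\<parallel> \<le> M/t for 0 < t \<le> 1.\<close>
definition analytic_semigroup :: "(real \<Rightarrow> 'a::real_normed_vector \<Rightarrow> 'a) \<Rightarrow> bool" where
  "analytic_semigroup S \<longleftrightarrow> C0_semigroup S \<and>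
     (\<forall>t>0. \<forall>x. S t x \<in> gen_dom S) \<and>
     (\<exists>M. \<forall>t\<in>{0<..1}. \<forall>x. norm (gen S (S t x)) \<le> M / t * norm x)"

definition bounded_on_graph ::
    "(real \<Rightarrow> 'a::real_normed_vector \<Rightarrow> 'a) \<Rightarrow> ('a \<Rightarrow> 'b::real_normed_vector) \<Rightarrow> bool" where
  "bounded_on_graph S B \<longleftrightarrow>
     (\<forall>x\<in>gen_dom S. \<forall>y\<in>gen_dom S. B (x + y) = B x + B y) \<and>
     (\<forall>x\<in>gen_dom S. \<forall>c. B (c *\<^sub>R x) = c *\<^sub>R B x) \<and>
     (\<exists>c\<ge>0. \<forall>x\<in>gen_dom S. norm (B x) \<le> c * norm (x, gen S x))"

end

(* Write g(t) = ||B S(t) u0||^2 and T = t2 - t1.  Since E has density eta in (t1, t2), some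
   subinterval J of length about T / N in the right half of [t1, t2] contains a set F of
   measure about eta |J| on which, by Markov's inequality, ||B S(t) u0|| is at most
   C N (int_E ||B S(t) u0||) / (eta T).  On J the derivative estimates make g real analytic
   with radius about rho T, so Taylor expansion together with a Remez inequality for
   polynomials bounds sup_J g by A^n sup_F g + 2^-n K ||u(t1)||^2 / T^2 for every n;
   optimising over n gives the Hoelder-type bound
   sup_J g <= C (sup_F g)^theta (||u(t1)||^2 / T^2)^(1 - theta).  Observability on a
   subwindow of J, followed by the pointwise bound on g between J and t2 and a second
   observation, controls ||u(t2)||^2 by sup_J g at the cost exp(C / T^k); all powers of
   1 / T are absorbed into that exponential. *)

theory Submission
  imports Defs "HOL-Computational_Algebra.Polynomial"
begin

section \<open>Elementary real inequalities\<close>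

lemma power_div_fact_le_exp:
  fixes x :: real
  assumes "0 \<le> x"
  shows "x ^ n / fact n \<le> exp x"
proof -
  have "(\<Sum>m\<in>{n}. inverse (fact m) * x ^ m) \<le> (\<Sum>m. inverse (fact m) * x ^ m)"
    by (rule sum_le_suminf[OF summable_exp]) (use assms in auto)
  thus ?thesis by (simp add: exp_def field_simps)
qed

lemma powr_le_fact_mult_exp:
  fixes z p :: real
  assumes "0 \<le> z" "0 \<le> p"
  shows "z powr p \<le> (1 + fact (nat \<lceil>p\<rceil>)) * exp z"
proof -
  define n where "n = nat \<lceil>p\<rceil>"
  have "z powr p \<le> 1 + z ^ n"
  proof (cases "z \<le> 1")
    case True
    hence "z powr p \<le> 1" using assms by (intro powr_le1) auto
    thus ?thesis using assms by (smt (verit) zero_le_power)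
  next
    case False
    hence "z powr p \<le> z powr real n" unfolding n_def by (intro powr_mono) linarith+
    thus ?thesis using False by (simp add: powr_realpow)
  qed
  moreover have "z ^ n \<le> fact n * exp z"
    using power_div_fact_le_exp[OF assms(1), of n] by (simp add: divide_le_eq mult.commute)
  moreover have "1 \<le> exp z" using assms by simp
  ultimately have "z powr p \<le> exp z + fact n * exp z" by linarith
  thus ?thesis unfolding n_def by (simp add: algebra_simps)
qed

lemma power_powr:
  fixes x r :: real
  assumes "0 < x"
  shows "(x ^ n) powr r = (x powr r) ^ n"
  using assms by (simp add: powr_realpow[symmetric] powr_powr powr_power mult.commute)

lemma powr_interpolation_mono:
  fixes x y a b \<gamma> \<theta> :: real
  assumes "0 \<le> x" "x \<le> \<gamma> * a" "0 \<le> y" "y \<le> \<gamma> * b"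
    and "0 \<le> a" "0 \<le> b" "0 \<le> \<gamma>" "0 \<le> \<theta>" "\<theta> \<le> 1"
  shows "x powr \<theta> * y powr (1 - \<theta>) \<le> \<gamma> * (a powr \<theta> * b powr (1 - \<theta>))"
proof (cases "\<gamma> > 0")
  case True
  have "x powr \<theta> * y powr (1 - \<theta>) \<le> (\<gamma> * a) powr \<theta> * (\<gamma> * b) powr (1 - \<theta>)"
    using assms by (intro mult_mono powr_mono2) auto
  also have "\<dots> = (\<gamma> powr \<theta> * \<gamma> powr (1 - \<theta>)) * (a powr \<theta> * b powr (1 - \<theta>))"
    using True assms by (simp add: powr_mult mult_ac)
  also have "\<gamma> powr \<theta> * \<gamma> powr (1 - \<theta>) = \<gamma>"
    using True by (simp add: powr_add[symmetric])
  finally show ?thesis .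
next
  case False
  hence "x = 0" using assms by simp
  thus ?thesis using assms by simp
qed

lemma abs_le_one_plus_square:
  fixes x :: real
  shows "\<bar>x\<bar> \<le> 1 + x\<^sup>2"
proof (cases "\<bar>x\<bar> \<le> 1")
  case True thus ?thesis using zero_le_power2[of x] by linarith
next
  case False
  hence "\<bar>x\<bar> * 1 \<le> \<bar>x\<bar> * \<bar>x\<bar>" by (intro mult_left_mono) auto
  thus ?thesis by (simp add: power2_eq_square)
qed

lemma exp_div_powr_antimono:
  fixes d k x y :: real
  assumes "0 \<le> d" "0 \<le> k" "0 < x" "x \<le> y"
  shows "exp (d / y powr k) \<le> exp (d / x powr k)"
  using assms by (auto intro!: divide_left_mono powr_mono2 mult_pos_pos)

lemma inverse_square_le_exp:
  fixes T k :: real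
  assumes "0 < T" "0 < k"
  shows "1 / T\<^sup>2 \<le> (1 + fact (nat \<lceil>2 / k\<rceil>)) * exp (1 / T powr k)"
proof -
  have "(1 / T powr k) powr (2 / k) = 1 / (T powr k) powr (2 / k)"
    using assms by (simp add: powr_divide)
  also have "(T powr k) powr (2 / k) = T powr 2" using assms by (simp add: powr_powr)
  also have "T powr 2 = T\<^sup>2" using assms by (simp add: powr_numeral)
  finally have "(1 / T powr k) powr (2 / k) = 1 / T\<^sup>2" .
  moreover have "(1 / T powr k) powr (2 / k) \<le> (1 + fact (nat \<lceil>2 / k\<rceil>)) * exp (1 / T powr k)"
    using assms by (intro powr_le_fact_mult_exp) auto
  ultimately show ?thesis by simp
qed

lemma powr_square:
  fixes x a :: real
  assumes "0 \<le> x"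
  shows "(x powr a)\<^sup>2 = (x\<^sup>2) powr a"
  using assms by (cases "x = 0") (simp_all add: power2_eq_square powr_mult)

lemma le_powr_form_of_square_le:
  fixes v P Q I M C \<theta> r :: real
  assumes sq: "v\<^sup>2 \<le> P * exp (Q / r) * (I\<^sup>2) powr \<theta> * (M\<^sup>2) powr (1 - \<theta>)"
    and "0 < r" "0 \<le> I" "0 \<le> M" "0 < C" "P \<le> (C\<^sup>2) powr \<theta>" "Q \<le> 2 * \<theta> * C"
  shows "v \<le> (C * exp (C / r) * I) powr \<theta> * M powr (1 - \<theta>)"
proof (rule power2_le_imp_le)
  have "exp (Q / r) \<le> ((exp (C / r))\<^sup>2) powr \<theta>"
    using assms by (simp add: exp_powr_real power2_eq_square exp_add[symmetric] divide_right_mono mult_ac)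
  hence "P * exp (Q / r) \<le> (C\<^sup>2) powr \<theta> * ((exp (C / r))\<^sup>2) powr \<theta>"
    using assms by (intro mult_mono) auto
  hence "P * exp (Q / r) * (I\<^sup>2) powr \<theta> * (M\<^sup>2) powr (1 - \<theta>)
      \<le> (C\<^sup>2) powr \<theta> * ((exp (C / r))\<^sup>2) powr \<theta> * (I\<^sup>2) powr \<theta> * (M\<^sup>2) powr (1 - \<theta>)"
    by (intro mult_right_mono) auto
  hence "v\<^sup>2 \<le> (C\<^sup>2) powr \<theta> * ((exp (C / r))\<^sup>2) powr \<theta> * (I\<^sup>2) powr \<theta> * (M\<^sup>2) powr (1 - \<theta>)"
    using sq by linarith
  also have "\<dots> = ((C * exp (C / r) * I) powr \<theta> * M powr (1 - \<theta>))\<^sup>2"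
    using assms by (simp add: power_mult_distrib powr_square powr_mult)
  finally show "v\<^sup>2 \<le> ((C * exp (C / r) * I) powr \<theta> * M powr (1 - \<theta>))\<^sup>2" .
qed simp

lemma exists_absorbing_constant:
  fixes P Q \<theta> :: real
  assumes "0 < \<theta>"
  shows "\<exists>C>0. P \<le> (C\<^sup>2) powr \<theta> \<and> Q \<le> 2 * \<theta> * C"
proof -
  define C where "C = max 1 (max (max P 0 powr (1 / (2 * \<theta>))) (Q / (2 * \<theta>)))"
  have "0 < C" by (simp add: C_def)
  have "P \<le> (max P 0 powr (1 / (2 * \<theta>))) powr (2 * \<theta>)"
    using assms by (simp add: powr_powr)
  also have "\<dots> \<le> C powr (2 * \<theta>)"
    using assms by (intro powr_mono2) (simp_all add: C_def)
  also have "\<dots> = (C powr 2) powr \<theta>" by (simp add: powr_powr)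
  also have "C powr 2 = C\<^sup>2" using \<open>0 < C\<close> by (simp add: powr_numeral)
  finally have "P \<le> (C\<^sup>2) powr \<theta>" .
  have "Q / (2 * \<theta>) \<le> C" by (simp add: C_def)
  hence "Q \<le> 2 * \<theta> * C" using assms by (simp add: divide_le_eq mult.commute)
  thus ?thesis using \<open>0 < C\<close> \<open>P \<le> (C\<^sup>2) powr \<theta>\<close> by blast
qed

section \<open>Lagrange interpolation at separated points\<close>

lemma lagrange_interpolation_identity:
  fixes x c :: "nat \<Rightarrow> real"
  assumes inj: "inj_on x {..<n}"
  shows "(\<Sum>m<n. c m * (t - a) ^ m) =
    (\<Sum>i<n. (\<Sum>m<n. c m * (x i - a) ^ m) * (\<Prod>j\<in>{..<n}-{i}. (t - x j) / (x i - x j)))"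
proof (cases n)
  case 0 thus ?thesis by simp
next
  case (Suc n')
  define P where "P s = (\<Sum>m<n. c m * (s - a) ^ m)" for s
  define p where "p = (\<Sum>m<n. smult (c m) ([:-a, 1:] ^ m))"
  define q where "q = (\<Sum>i<n. smult (P (x i) / (\<Prod>j\<in>{..<n}-{i}. (x i - x j)))
                                   (\<Prod>j\<in>{..<n}-{i}. [:- x j, 1:]))"
  have poly_p: "poly p s = P s" for s by (simp add: p_def P_def poly_sum)
  have poly_q: "poly q s = (\<Sum>i<n. P (x i) * (\<Prod>j\<in>{..<n}-{i}. (s - x j) / (x i - x j)))" for s
    by (simp add: q_def poly_sum poly_prod prod_dividef)
  have deg_p: "degree p \<le> n'"
    unfolding p_def
  proof (rule degree_sum_le)
    fix m assume "m \<in> {..<n}"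
    thus "degree (smult (c m) ([:-a, 1:] ^ m)) \<le> n'"
      using Suc by (metis degree_linear_power degree_smult_le order.trans lessThan_iff less_Suc_eq_le)
  qed simp
  have deg_q: "degree q \<le> n'"
    unfolding q_def
  proof (rule degree_sum_le)
    fix i assume i: "i \<in> {..<n}"
    have "degree (\<Prod>j\<in>{..<n}-{i}. [:- x j, 1:]) \<le> (\<Sum>j\<in>{..<n}-{i}. degree [:- x j, 1:])"
      using degree_prod_sum_le[of "{..<n}-{i}" "\<lambda>j. [:- x j, 1:]"] by (simp add: o_def)
    also have "\<dots> = n'" using i Suc by simp
    finally show "degree (smult (P (x i) / (\<Prod>j\<in>{..<n}-{i}. (x i - x j)))
                    (\<Prod>j\<in>{..<n}-{i}. [:- x j, 1:])) \<le> n'"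
      using degree_smult_le order.trans by blast
  qed simp
  have agree: "poly p s = poly q s" if s: "s \<in> x ` {..<n}" for s
  proof -
    obtain k where k: "k < n" "s = x k" using s by auto
    have vanish: "(\<Prod>j\<in>{..<n}-{i}. (x k - x j) / (x i - x j)) = 0" if "i \<in> {..<n}-{k}" for i
      using that k(1) by (intro prod_zero) auto
    have one: "(x k - x j) / (x k - x j) = 1" if "j \<in> {..<n}-{k}" for j
      using that inj k(1) by (auto dest: inj_onD)
    have "poly q s = P (x k) * (\<Prod>j\<in>{..<n}-{k}. (x k - x j) / (x k - x j))
        + (\<Sum>i\<in>{..<n}-{k}. P (x i) * (\<Prod>j\<in>{..<n}-{i}. (x k - x j) / (x i - x j)))"
      unfolding poly_q k(2) using k(1) by (subst sum.remove[of _ k]) auto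
    also have "\<dots> = P (x k)"
      using vanish one by (simp add: sum.neutral prod.neutral)
    finally show ?thesis using poly_p k by simp
  qed
  have card: "card (x ` {..<n}) = n" using inj by (simp add: card_image)
  have "p = q" by (rule poly_eqI_degree[of "x ` {..<n}", OF agree]) (use card deg_p deg_q Suc in linarith)+
  hence "poly p t = poly q t" by simp
  thus ?thesis using poly_p poly_q P_def by simp
qed

lemma prod_lessThan_diff_fact: "(\<Prod>j<i. real (i - j)) = fact i"
proof (induction i)
  case (Suc i)
  have "(\<Prod>j<Suc i. real (Suc i - j)) = real (Suc i) * (\<Prod>j<i. real (Suc i - Suc j))"
    by (subst prod.lessThan_Suc_shift) simp
  also have "\<dots> = fact (Suc i)" using Suc by simp
  finally show ?case .
qed simp

lemma prod_abs_diff_fact: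
  assumes "i < n"
  shows "(\<Prod>j\<in>{..<n}-{i}. \<bar>real i - real j\<bar>) = fact i * fact (n - 1 - i)"
proof -
  define m where "m = n - i - 1"
  have n: "n = i + 1 + m" using assms by (simp add: m_def)
  have "(\<Prod>j\<in>{..<i+1+m}-{i}. \<bar>real i - real j\<bar>) = fact i * fact m"
  proof (induction m)
    case 0
    have "{..<i+1+0}-{i} = {..<i}" by auto
    hence "(\<Prod>j\<in>{..<i+1+0}-{i}. \<bar>real i - real j\<bar>) = (\<Prod>j<i. real (i - j))"
      by (auto intro!: prod.cong simp: of_nat_diff)
    thus ?case by (simp only: prod_lessThan_diff_fact fact_0 of_nat_1 mult_1_right)
  next
    case (Suc m)
    have "{..<i+1+Suc m}-{i} = insert (i+1+m) ({..<i+1+m}-{i})" by auto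
    hence "(\<Prod>j\<in>{..<i+1+Suc m}-{i}. \<bar>real i - real j\<bar>)
        = \<bar>real i - real (i+1+m)\<bar> * (\<Prod>j\<in>{..<i+1+m}-{i}. \<bar>real i - real j\<bar>)"
      by simp
    also have "\<dots> = fact i * fact (Suc m)" using Suc by (simp add: algebra_simps)
    finally show ?case .
  qed
  thus ?thesis using n by simp
qed

lemma lagrange_basis_abs_le:
  fixes x :: "nat \<Rightarrow> real"
  assumes sep: "\<And>i j. i < j \<Longrightarrow> j < n \<Longrightarrow> real (j - i) * \<delta> \<le> x j - x i"
    and "0 < \<delta>" and "i < n"
    and x: "\<And>j. j < n \<Longrightarrow> x j \<in> {a..b}" and t: "t \<in> {a..b}"
  shows "\<bar>\<Prod>j\<in>{..<n}-{i}. (t - x j) / (x i - x j)\<bar>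
           \<le> ((b - a) / \<delta>) ^ (n - 1) / (fact i * fact (n - 1 - i))"
proof -
  have card: "card ({..<n}-{i}) = n - 1" using \<open>i < n\<close> by simp
  have num: "(\<Prod>j\<in>{..<n}-{i}. \<bar>t - x j\<bar>) \<le> (b - a) ^ (n - 1)"
    using prod_mono[of "{..<n}-{i}" "\<lambda>j. \<bar>t - x j\<bar>" "\<lambda>_. b - a"] x t card by force
  have "\<bar>real i - real j\<bar> * \<delta> \<le> \<bar>x i - x j\<bar>" if "j < n" for j
  proof (cases i j rule: linorder_cases)
    case less thus ?thesis using sep[of i j] that \<open>0 < \<delta>\<close> by (simp add: of_nat_diff)
  next
    case greater thus ?thesis using sep[of j i] that \<open>i < n\<close> \<open>0 < \<delta>\<close> by (simp add: of_nat_diff)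
  qed simp
  hence "(\<Prod>j\<in>{..<n}-{i}. \<bar>real i - real j\<bar> * \<delta>) \<le> (\<Prod>j\<in>{..<n}-{i}. \<bar>x i - x j\<bar>)"
    using \<open>0 < \<delta>\<close> by (intro prod_mono) auto
  moreover have "(\<Prod>j\<in>{..<n}-{i}. \<bar>real i - real j\<bar> * \<delta>) = \<delta> ^ (n - 1) * (fact i * fact (n - 1 - i))"
    by (simp add: prod.distrib prod_abs_diff_fact[OF \<open>i < n\<close>] card mult.commute)
  ultimately have den: "\<delta> ^ (n - 1) * (fact i * fact (n - 1 - i)) \<le> (\<Prod>j\<in>{..<n}-{i}. \<bar>x i - x j\<bar>)"
    by simp
  have "\<bar>\<Prod>j\<in>{..<n}-{i}. (t - x j) / (x i - x j)\<bar>
      = (\<Prod>j\<in>{..<n}-{i}. \<bar>t - x j\<bar>) / (\<Prod>j\<in>{..<n}-{i}. \<bar>x i - x j\<bar>)"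
    by (simp add: abs_prod prod_dividef)
  also have "\<dots> \<le> (b - a) ^ (n - 1) / (\<delta> ^ (n - 1) * (fact i * fact (n - 1 - i)))"
    using num den t \<open>0 < \<delta>\<close> by (intro frac_le) auto
  finally show ?thesis by (simp add: power_divide)
qed

lemma sum_lagrange_basis_abs_le:
  fixes x :: "nat \<Rightarrow> real"
  assumes sep: "\<And>i j. i < j \<Longrightarrow> j < n \<Longrightarrow> real (j - i) * \<delta> \<le> x j - x i"
    and "0 < \<delta>" and x: "\<And>i. i < n \<Longrightarrow> x i \<in> {a..b}" and t: "t \<in> {a..b}" and "1 \<le> n"
  shows "(\<Sum>i<n. \<bar>\<Prod>j\<in>{..<n}-{i}. (t - x j) / (x i - x j)\<bar>)
           \<le> (2 * (b - a) / \<delta>) ^ (n - 1) / fact (n - 1)"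
proof -
  have binom: "((b - a) / \<delta>) ^ (n - 1) / (fact i * fact (n - 1 - i))
      = ((b - a) / \<delta>) ^ (n - 1) / fact (n - 1) * real ((n - 1) choose i)" if "i < n" for i
  proof -
    have "i \<le> n - 1" using that by simp
    hence "(fact (n - 1) :: real) = fact i * fact (n - 1 - i) * real ((n - 1) choose i)"
      by (metis binomial_fact_lemma of_nat_fact of_nat_mult)
    moreover have "real ((n - 1) choose i) > 0" using \<open>i \<le> n - 1\<close> by simp
    ultimately show ?thesis by simp
  qed
  have "(\<Sum>i<n. \<bar>\<Prod>j\<in>{..<n}-{i}. (t - x j) / (x i - x j)\<bar>)
      \<le> (\<Sum>i<n. ((b - a) / \<delta>) ^ (n - 1) / fact (n - 1) * real ((n - 1) choose i))"
  proof (rule sum_mono)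
    fix i assume "i \<in> {..<n}"
    thus "\<bar>\<Prod>j\<in>{..<n}-{i}. (t - x j) / (x i - x j)\<bar>
        \<le> ((b - a) / \<delta>) ^ (n - 1) / fact (n - 1) * real ((n - 1) choose i)"
      using lagrange_basis_abs_le[of n \<delta> x i a b t] sep \<open>0 < \<delta>\<close> x t binom by simp
  qed
  also have "\<dots> = ((b - a) / \<delta>) ^ (n - 1) / fact (n - 1) * (\<Sum>i\<le>n - 1. real ((n - 1) choose i))"
    using \<open>1 \<le> n\<close> by (simp add: sum_distrib_left lessThan_Suc_atMost[symmetric])
  also have "(\<Sum>i\<le>n - 1. real ((n - 1) choose i)) = 2 ^ (n - 1)"
    by (metis choose_row_sum of_nat_numeral of_nat_power of_nat_sum)
  also have "((b - a) / \<delta>) ^ (n - 1) / fact (n - 1) * 2 ^ (n - 1)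
      = (2 * (b - a) / \<delta>) ^ (n - 1) / fact (n - 1)"
    by (simp add: power_mult_distrib[symmetric] mult.commute)
  finally show ?thesis .
qed

lemma separated_lagrange_constant_le:
  assumes "1 \<le> n" "0 < \<epsilon>" "\<epsilon> \<le> 1"
  shows "(4 * real n / \<epsilon>) ^ (n - 1) / fact (n - 1) \<le> (12 / \<epsilon>) ^ n"
proof -
  obtain k where k: "n = Suc k" using assms by (cases n) auto
  have "real n ^ n / fact n \<le> exp (real n)" by (rule power_div_fact_le_exp) simp
  also have "exp (real n) = exp 1 ^ n" using exp_of_nat_mult[of n 1] by simp
  also have "\<dots> \<le> 3 ^ n" by (rule power_mono[OF exp_le]) simp
  also have "real n ^ n / fact n = real n ^ k / fact k" using k by simp
  finally have e: "real n ^ k / fact k \<le> 3 ^ n" .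
  have "4 * real n / \<epsilon> = 4 / \<epsilon> * real n" by simp
  hence "(4 * real n / \<epsilon>) ^ (n - 1) / fact (n - 1) = (4 / \<epsilon>) ^ k * (real n ^ k / fact k)"
    using k by (simp only: power_mult_distrib diff_Suc_1) simp
  also have "\<dots> \<le> (4 / \<epsilon>) ^ n * 3 ^ n"
    using assms k e by (intro mult_mono power_increasing) auto
  also have "\<dots> = (12 / \<epsilon>) ^ n" by (simp add: power_mult_distrib[symmetric])
  finally show ?thesis .
qed

section \<open>A Remez inequality\<close>

lemma measure_Int_atLeastAtMost_split:
  fixes F :: "real set"
  assumes F: "F \<in> sets lebesgue" "F \<subseteq> {a..b}" and "z \<le> y"
  shows "measure lebesgue (F \<inter> {a..y}) = measure lebesgue (F \<inter> {a..z}) + measure lebesgue (F \<inter> {z<..y})"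
proof -
  have bounded: "F \<inter> S \<in> lmeasurable" if "S \<in> sets lebesgue" for S
    using F that by (intro bounded_set_imp_lmeasurable) (auto intro: bounded_subset[OF bounded_closed_interval])
  have "F \<inter> {a..y} = (F \<inter> {a..z}) \<union> (F \<inter> {z<..y})" using F \<open>z \<le> y\<close> by auto
  thus ?thesis
    using bounded[of "{a..z}"] bounded[of "{z<..y}"] by (auto intro: measure_Union simp: fmeasurable_def)
qed

lemma measure_Int_atLeastAtMost_mono_lipschitz:
  fixes F :: "real set"
  assumes F: "F \<in> sets lebesgue" "F \<subseteq> {a..b}" and "z \<le> y"
  shows "measure lebesgue (F \<inter> {a..z}) \<le> measure lebesgue (F \<inter> {a..y})"
    and "measure lebesgue (F \<inter> {a..y}) - measure lebesgue (F \<inter> {a..z}) \<le> y - z"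
proof -
  have "measure lebesgue (F \<inter> {z<..y}) \<le> measure lebesgue {z<..y}"
    using F \<open>z \<le> y\<close> by (intro measure_mono_fmeasurable) (auto simp: fmeasurable_def)
  thus "measure lebesgue (F \<inter> {a..z}) \<le> measure lebesgue (F \<inter> {a..y})"
    and "measure lebesgue (F \<inter> {a..y}) - measure lebesgue (F \<inter> {a..z}) \<le> y - z"
    using measure_Int_atLeastAtMost_split[OF F \<open>z \<le> y\<close>] \<open>z \<le> y\<close> by auto
qed

lemma exists_point_with_measure_below_in_range:
  fixes F :: "real set"
  assumes F: "F \<in> sets lebesgue" "F \<subseteq> {a..b}" and pq: "0 \<le> p" "p < q" "q \<le> measure lebesgue F"
  shows "\<exists>x\<in>F. p \<le> measure lebesgue (F \<inter> {a..x}) \<and> measure lebesgue (F \<inter> {a..x}) \<le> q"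
proof -
  define c where "c y = measure lebesgue (F \<inter> {a..y})" for y
  note mono = measure_Int_atLeastAtMost_mono_lipschitz(1)[OF F, folded c_def]
  note lip = measure_Int_atLeastAtMost_mono_lipschitz(2)[OF F, folded c_def]
  have "F \<noteq> {}" using pq by auto
  hence "a \<le> b" using F by auto
  have "c a \<le> measure lebesgue {a}"
    unfolding c_def using F by (intro measure_mono_fmeasurable) (auto simp: fmeasurable_def)
  hence "c a = 0" unfolding c_def by (simp add: antisym)
  have "c b = measure lebesgue F" unfolding c_def using F by (simp add: Int_absorb2)
  have "1-lipschitz_on {a..b} c"
  proof (rule lipschitz_onI)
    fix x y :: real
    show "dist (c x) (c y) \<le> 1 * dist x y"
      using lip[of x y] lip[of y x] mono[of x y] mono[of y x] by (cases "x \<le> y") (auto simp: dist_real_def)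
  qed simp
  hence cont: "continuous_on {a..b} c" by (rule lipschitz_on_continuous_on)
  obtain \<alpha> where \<alpha>: "a \<le> \<alpha>" "\<alpha> \<le> b" "c \<alpha> = p"
    using IVT'[of c a p b] \<open>c a = 0\<close> \<open>c b = measure lebesgue F\<close> pq \<open>a \<le> b\<close> cont by auto
  obtain \<beta> where \<beta>: "\<alpha> \<le> \<beta>" "\<beta> \<le> b" "c \<beta> = q"
    using IVT'[of c \<alpha> q b] \<alpha> \<open>c b = measure lebesgue F\<close> pq continuous_on_subset[OF cont] by auto
  have "measure lebesgue (F \<inter> {\<alpha><..\<beta>}) = q - p"
    using measure_Int_atLeastAtMost_split[OF F \<beta>(1)] \<alpha> \<beta> by (simp add: c_def)
  hence "F \<inter> {\<alpha><..\<beta>} \<noteq> {}" using pq by auto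
  then obtain x where x: "x \<in> F" "\<alpha> < x" "x \<le> \<beta>" by auto
  thus ?thesis using mono[of \<alpha> x] mono[of x \<beta>] \<alpha> \<beta> unfolding c_def by auto
qed

lemma exists_separated_points:
  fixes F :: "real set"
  assumes F: "F \<in> sets lebesgue" "F \<subseteq> {a..b}" and "0 < measure lebesgue F" and "1 \<le> n"
  shows "\<exists>x. (\<forall>i<n. x i \<in> F) \<and>
           (\<forall>i j. i < j \<longrightarrow> j < n \<longrightarrow> real (j - i) * (measure lebesgue F / (2 * n)) \<le> x j - x i)"
proof -
  define m where "m = measure lebesgue F"
  define c where "c y = measure lebesgue (F \<inter> {a..y})" for y
  have "\<exists>x\<in>F. real i * m / n \<le> c x \<and> c x \<le> (real i + 1/2) * m / n" if "i < n" for i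
  proof (rule exists_point_with_measure_below_in_range[OF F, folded m_def c_def])
    have "(real i + 1/2) * m \<le> real n * m"
      using that \<open>0 < measure lebesgue F\<close> by (intro mult_right_mono) (auto simp: m_def)
    thus "(real i + 1/2) * m / n \<le> m" using \<open>1 \<le> n\<close> by (simp add: divide_le_eq mult.commute)
  qed (use \<open>0 < measure lebesgue F\<close> \<open>1 \<le> n\<close> in \<open>auto simp: m_def divide_strict_right_mono\<close>)
  then obtain x where x: "\<And>i. i < n \<Longrightarrow> x i \<in> F \<and> real i * m / n \<le> c (x i) \<and> c (x i) \<le> (real i + 1/2) * m / n"
    by metis
  have "real (j - i) * (m / (2 * n)) \<le> x j - x i" if ij: "i < j" "j < n" for i j
  proof -
    have "real (j - i) * (m / (2 * n)) = (real j - real i) / 2 * m / n"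
      using ij by (simp add: of_nat_diff)
    also have "\<dots> \<le> (real j - real i - 1/2) * m / n"
      using ij \<open>0 < measure lebesgue F\<close> by (intro divide_right_mono mult_right_mono) (auto simp: m_def)
    also have "\<dots> \<le> c (x j) - c (x i)" using x[of i] x[of j] ij by (simp add: field_simps)
    finally have gap: "real (j - i) * (m / (2 * n)) \<le> c (x j) - c (x i)" .
    moreover have "0 < real (j - i) * (m / (2 * n))"
      using ij \<open>0 < measure lebesgue F\<close> \<open>1 \<le> n\<close> by (simp add: m_def)
    ultimately have "x i \<le> x j"
      using measure_Int_atLeastAtMost_mono_lipschitz(1)[OF F, of "x j" "x i", folded c_def] by smt
    thus ?thesis
      using gap measure_Int_atLeastAtMost_mono_lipschitz(2)[OF F, of "x i" "x j", folded c_def] by linarith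
  qed
  thus ?thesis using x unfolding m_def by blast
qed

text \<open>The constant comes from Lagrange interpolation at \<open>n\<close> points of \<open>F\<close> that are
  \<open>|F| / (2 n)\<close> apart.\<close>

lemma remez_polynomial_bound:
  fixes c :: "nat \<Rightarrow> real"
  assumes F: "F \<in> sets lebesgue" "F \<subseteq> {a..a + len}" "\<epsilon> * len \<le> measure lebesgue F"
    and "0 < len" "0 < \<epsilon>" "\<epsilon> \<le> 1" "1 \<le> n"
    and bound: "\<And>x. x \<in> F \<Longrightarrow> \<bar>\<Sum>m<n. c m * (x - a) ^ m\<bar> \<le> M"
    and t: "t \<in> {a..a + len}"
  shows "\<bar>\<Sum>m<n. c m * (t - a) ^ m\<bar> \<le> (12 / \<epsilon>) ^ n * M"
proof -
  define P where "P x = (\<Sum>m<n. c m * (x - a) ^ m)" for x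
  define \<delta> where "\<delta> = measure lebesgue F / (2 * n)"
  have "0 < measure lebesgue F" using F(3) \<open>0 < len\<close> \<open>0 < \<epsilon>\<close> by (smt (verit) mult_pos_pos)
  hence "0 < \<delta>" using \<open>1 \<le> n\<close> by (simp add: \<delta>_def)
  obtain x where xF: "\<And>i. i < n \<Longrightarrow> x i \<in> F"
    and sep: "\<And>i j. i < j \<Longrightarrow> j < n \<Longrightarrow> real (j - i) * \<delta> \<le> x j - x i"
    using exists_separated_points[OF F(1,2) \<open>0 < measure lebesgue F\<close> \<open>1 \<le> n\<close>] unfolding \<delta>_def by blast
  have "inj_on x {..<n}"
  proof (rule inj_onI)
    fix i j assume "i \<in> {..<n}" "j \<in> {..<n}" "x i = x j"
    thus "i = j" using sep[of i j] sep[of j i] \<open>0 < \<delta>\<close>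
      by (cases i j rule: linorder_cases) (auto simp: mult_le_0_iff)
  qed
  have x: "x i \<in> {a..a + len}" if "i < n" for i using xF[OF that] F(2) by auto
  have "len / \<delta> \<le> 2 * n / \<epsilon>"
    using F(3) \<open>0 < len\<close> \<open>0 < \<epsilon>\<close> \<open>0 < measure lebesgue F\<close> \<open>1 \<le> n\<close>
    by (simp add: \<delta>_def field_simps)
  hence "(2 * (a + len - a) / \<delta>) ^ (n - 1) / fact (n - 1) \<le> (4 * real n / \<epsilon>) ^ (n - 1) / fact (n - 1)"
    using \<open>0 < \<delta>\<close> \<open>0 < len\<close> by (intro divide_right_mono power_mono) auto
  also have "\<dots> \<le> (12 / \<epsilon>) ^ n" using separated_lagrange_constant_le assms by blast
  finally have lebesgue_const:
    "(\<Sum>i<n. \<bar>\<Prod>j\<in>{..<n}-{i}. (t - x j) / (x i - x j)\<bar>) \<le> (12 / \<epsilon>) ^ n"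
    using sum_lagrange_basis_abs_le[OF sep \<open>0 < \<delta>\<close> x t \<open>1 \<le> n\<close>] by linarith
  have "0 \<le> M" using bound xF[of 0] \<open>1 \<le> n\<close> by force
  have "\<bar>P t\<bar> = \<bar>\<Sum>i<n. P (x i) * (\<Prod>j\<in>{..<n}-{i}. (t - x j) / (x i - x j))\<bar>"
    unfolding P_def by (subst lagrange_interpolation_identity[OF \<open>inj_on x {..<n}\<close>]) rule
  also have "\<dots> \<le> (\<Sum>i<n. M * \<bar>\<Prod>j\<in>{..<n}-{i}. (t - x j) / (x i - x j)\<bar>)"
    unfolding abs_mult[symmetric] using bound[OF xF]
    by (intro order.trans[OF sum_abs] sum_mono) (auto simp: P_def abs_mult intro: mult_right_mono)
  also have "\<dots> \<le> M * (12 / \<epsilon>) ^ n"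
    using lebesgue_const \<open>0 \<le> M\<close> by (simp add: sum_distrib_left[symmetric] mult_left_mono)
  finally show ?thesis by (simp add: P_def mult.commute)
qed

lemma taylor_remainder_abs_le:
  fixes g :: "real \<Rightarrow> real" and diff :: "nat \<Rightarrow> real \<Rightarrow> real"
  assumes "diff 0 = g"
    and deriv: "\<And>m t. a \<le> t \<Longrightarrow> t \<le> a + len \<Longrightarrow> (diff m has_real_derivative diff (Suc m) t) (at t)"
    and bound: "\<And>t. a \<le> t \<Longrightarrow> t \<le> a + len \<Longrightarrow> \<bar>diff n t\<bar> \<le> W * fact n * R ^ n"
    and "0 \<le> W" "0 \<le> R" "1 \<le> n" and x: "a \<le> x" "x \<le> a + len"
  shows "\<bar>g x - (\<Sum>m<n. diff m a / fact m * (x - a) ^ m)\<bar> \<le> W * (R * len) ^ n"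
proof (cases "x = a")
  case True
  obtain k where "n = Suc k" using \<open>1 \<le> n\<close> by (cases n) auto
  thus ?thesis using True \<open>diff 0 = g\<close> assms x by (simp add: sum.lessThan_Suc_shift)
next
  case False
  obtain \<xi> where \<xi>: "a < \<xi>" "\<xi> < x"
    and taylor: "g x = (\<Sum>m<n. diff m a / fact m * (x - a) ^ m) + diff n \<xi> / fact n * (x - a) ^ n"
    using Taylor[of n diff g a "a + len" a x] assms x False by auto
  have "\<bar>g x - (\<Sum>m<n. diff m a / fact m * (x - a) ^ m)\<bar> = \<bar>diff n \<xi>\<bar> / fact n * \<bar>x - a\<bar> ^ n"
    using taylor by (simp add: abs_mult power_abs)
  also have "\<dots> \<le> (W * fact n * R ^ n) / fact n * len ^ n"
    using bound[of \<xi>] \<xi> x assms by (intro mult_mono divide_right_mono power_mono) auto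
  finally show ?thesis by (simp add: power_mult_distrib)
qed

lemma remez_type_bound:
  fixes g :: "real \<Rightarrow> real" and diff :: "nat \<Rightarrow> real \<Rightarrow> real"
  assumes "diff 0 = g"
    and deriv: "\<And>m t. a \<le> t \<Longrightarrow> t \<le> a + len \<Longrightarrow> (diff m has_real_derivative diff (Suc m) t) (at t)"
    and bound: "\<And>m t. a \<le> t \<Longrightarrow> t \<le> a + len \<Longrightarrow> \<bar>diff m t\<bar> \<le> W * fact m * R ^ m"
    and "0 \<le> W" "0 \<le> R" "R * len \<le> \<epsilon> / 24" "0 < len" "0 < \<epsilon>" "\<epsilon> \<le> 1" "1 \<le> n"
    and F: "F \<in> sets lebesgue" "F \<subseteq> {a..a + len}" "\<epsilon> * len \<le> measure lebesgue F"
    and small: "\<And>x. x \<in> F \<Longrightarrow> \<bar>g x\<bar> \<le> c"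
    and t: "a \<le> t" "t \<le> a + len"
  shows "g t \<le> (12 / \<epsilon>) ^ n * c + 2 * W / 2 ^ n"
proof -
  define P where "P x = (\<Sum>m<n. diff m a / fact m * (x - a) ^ m)" for x
  define r where "r = W * (R * len) ^ n"
  have remainder: "\<bar>g x - P x\<bar> \<le> r" if "a \<le> x" "x \<le> a + len" for x
    unfolding P_def r_def using taylor_remainder_abs_le[OF \<open>diff 0 = g\<close> deriv bound] assms that by blast
  have "\<bar>P x\<bar> \<le> c + r" if "x \<in> F" for x
    using remainder[of x] small[OF that] that F(2) by force
  hence "\<bar>P t\<bar> \<le> (12 / \<epsilon>) ^ n * (c + r)"
    unfolding P_def using t assms by (intro remez_polynomial_bound[OF F]) auto
  moreover have "(12 / \<epsilon>) ^ n * (c + r) = (12 / \<epsilon>) ^ n * c + W * ((12 / \<epsilon>) * (R * len)) ^ n"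
    by (simp only: r_def power_mult_distrib distrib_left mult_ac)
  ultimately have "g t \<le> (12 / \<epsilon>) ^ n * c + W * ((12 / \<epsilon>) * (R * len)) ^ n + W * (R * len) ^ n"
    using remainder[OF t] by (simp add: r_def)
  also have "\<dots> \<le> (12 / \<epsilon>) ^ n * c + W * (1 / 2) ^ n + W * (1 / 2) ^ n"
  proof -
    have "(12 / \<epsilon>) * (R * len) \<le> 1 / 2" and "R * len \<le> 1 / 2"
      using assms by (auto simp: field_simps)
    thus ?thesis using assms by (intro add_mono mult_left_mono power_mono) auto
  qed
  finally show ?thesis by (simp add: power_divide)
qed

section \<open>Propagation of smallness\<close>

definition interp_exponent :: "real \<Rightarrow> real" where
  "interp_exponent A = ln 2 / ln (2 * A)"

lemma interp_exponent_bounds: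
  assumes "2 \<le> A"
  shows "0 < interp_exponent A" "interp_exponent A < 1"
proof -
  have "ln 2 < ln (2 * A)" using assms by simp
  moreover have "0 < ln (2::real)" by simp
  ultimately have "0 < ln (2 * A)" by linarith
  thus "0 < interp_exponent A" "interp_exponent A < 1"
    using \<open>ln 2 < ln (2 * A)\<close> unfolding interp_exponent_def by simp_all
qed

lemma powr_interp_exponent:
  assumes "2 \<le> A"
  shows "(2 * A) powr interp_exponent A = 2" "(2 * A) powr (1 - interp_exponent A) = A"
proof -
  have "ln 2 < ln (2 * A)" "0 < ln (2::real)" using assms by simp_all
  thus "(2 * A) powr interp_exponent A = 2"
    using assms by (simp add: powr_def interp_exponent_def)
  thus "(2 * A) powr (1 - interp_exponent A) = A"
    using assms by (simp add: powr_diff)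
qed

text \<open>Taking the least \<open>n\<close> with \<open>W / x \<le> (2 A)^n\<close> makes both \<open>A^n x\<close> and \<open>2^-n W\<close>
  comparable to \<open>x^\<theta> W^(1-\<theta>)\<close>, because \<open>(2 A)^\<theta> = 2\<close>.\<close>

lemma exists_balancing_scale:
  fixes A x W :: real
  assumes "2 \<le> A" "0 < x" "x < W"
  defines "\<theta> \<equiv> interp_exponent A"
  shows "\<exists>n\<ge>1. A ^ n * x \<le> A * (x powr \<theta> * W powr (1 - \<theta>))
                \<and> 2 * W / 2 ^ n \<le> 2 * (x powr \<theta> * W powr (1 - \<theta>))"
proof -
  define q where "q = W / x"
  have "1 < q" using assms by (simp add: q_def)
  have ex: "\<exists>n. q \<le> (2 * A) ^ n" using real_arch_pow[of "2 * A" q] assms by (auto intro: less_imp_le)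
  define n where "n = (LEAST n. q \<le> (2 * A) ^ n)"
  have up: "q \<le> (2 * A) ^ n" unfolding n_def by (rule LeastI_ex[OF ex])
  hence "1 \<le> n" using \<open>1 < q\<close> by (cases n) auto
  have down: "(2 * A) ^ (n - 1) < q"
    using not_less_Least[of "n - 1" "\<lambda>n. q \<le> (2 * A) ^ n"] \<open>1 \<le> n\<close> by (simp add: n_def)
  have "0 < \<theta>" "\<theta> < 1" using interp_exponent_bounds assms by auto
  have "q powr \<theta> \<le> ((2 * A) ^ n) powr \<theta>" using up \<open>1 < q\<close> \<open>0 < \<theta>\<close> by (intro powr_mono2) auto
  also have "\<dots> = ((2 * A) powr \<theta>) ^ n" using assms by (intro power_powr) simp
  also have "\<dots> = 2 ^ n" using assms by (simp add: powr_interp_exponent)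
  finally have "2 * W / 2 ^ n \<le> 2 * W / q powr \<theta>"
    using \<open>1 < q\<close> assms by (intro divide_left_mono) auto
  also have "\<dots> = 2 * (x powr \<theta> * W powr (1 - \<theta>))"
    using assms by (simp add: q_def powr_divide powr_diff field_simps)
  finally have large: "2 * W / 2 ^ n \<le> 2 * (x powr \<theta> * W powr (1 - \<theta>))" .
  have "A ^ (n - 1) = ((2 * A) powr (1 - \<theta>)) ^ (n - 1)"
    using assms by (simp add: powr_interp_exponent)
  also have "\<dots> = ((2 * A) ^ (n - 1)) powr (1 - \<theta>)" using assms by (intro power_powr[symmetric]) simp
  also have "\<dots> \<le> q powr (1 - \<theta>)" using down \<open>\<theta> < 1\<close> assms by (intro powr_mono2) auto
  finally have "A ^ n * x \<le> A * (q powr (1 - \<theta>) * x)"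
    using \<open>1 \<le> n\<close> assms by (cases n) (auto intro: mult_right_mono)
  also have "q powr (1 - \<theta>) * x = x powr \<theta> * W powr (1 - \<theta>)"
    using assms by (simp add: q_def powr_divide powr_diff field_simps)
  finally show ?thesis using large \<open>1 \<le> n\<close> by blast
qed

lemma le_powr_interpolation_of_geometric_bounds:
  fixes G x W A :: real
  assumes "2 \<le> A" "0 \<le> x" "0 \<le> W"
    and geometric: "\<And>n. 1 \<le> n \<Longrightarrow> G \<le> A ^ n * x + 2 * W / 2 ^ n"
    and "G \<le> W"
  defines "\<theta> \<equiv> interp_exponent A"
  shows "G \<le> (A + 2) * x powr \<theta> * W powr (1 - \<theta>)"
proof -
  have "0 < \<theta>" "\<theta> < 1" using interp_exponent_bounds assms by auto
  consider "W \<le> x" | "x = 0" | "0 < x" "x < W" using assms by linarith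
  thus ?thesis
  proof cases
    case 1
    have "G \<le> W powr \<theta> * W powr (1 - \<theta>)"
      using \<open>G \<le> W\<close> \<open>0 \<le> W\<close> by (cases "W = 0") (simp_all add: powr_add[symmetric])
    also have "\<dots> \<le> x powr \<theta> * W powr (1 - \<theta>)"
      using 1 \<open>0 < \<theta>\<close> \<open>0 \<le> W\<close> by (intro mult_right_mono powr_mono2) auto
    also have "\<dots> \<le> (A + 2) * x powr \<theta> * W powr (1 - \<theta>)"
      using \<open>2 \<le> A\<close> by (simp add: mult.assoc mult_le_cancel_right1 not_less)
    finally show ?thesis .
  next
    case 2
    have "(\<lambda>n. 2 * W / 2 ^ Suc n) \<longlonglongrightarrow> 0"
      using LIMSEQ_divide_realpow_zero[of 2 "2 * W"] by (rule LIMSEQ_Suc) simp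
    moreover have "G \<le> 2 * W / 2 ^ Suc n" for n using geometric[of "Suc n"] 2 by simp
    ultimately have "G \<le> 0" by (intro LIMSEQ_le_const) auto
    thus ?thesis using 2 by simp
  next
    case 3
    then obtain n where "1 \<le> n" and n: "A ^ n * x \<le> A * (x powr \<theta> * W powr (1 - \<theta>))"
      "2 * W / 2 ^ n \<le> 2 * (x powr \<theta> * W powr (1 - \<theta>))"
      using exists_balancing_scale[OF \<open>2 \<le> A\<close>] unfolding \<theta>_def by blast
    thus ?thesis using geometric[OF \<open>1 \<le> n\<close>] by (simp add: algebra_simps)
  qed
qed

lemma propagation_of_smallness:
  fixes g :: "real \<Rightarrow> real" and diff :: "nat \<Rightarrow> real \<Rightarrow> real"
  assumes "diff 0 = g"
    and deriv: "\<And>m t. a \<le> t \<Longrightarrow> t \<le> a + len \<Longrightarrow> (diff m has_real_derivative diff (Suc m) t) (at t)"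
    and bound: "\<And>m t. a \<le> t \<Longrightarrow> t \<le> a + len \<Longrightarrow> \<bar>diff m t\<bar> \<le> W * fact m * R ^ m"
    and "0 \<le> W" "0 \<le> R" "R * len \<le> \<epsilon> / 24" "0 < len" "0 < \<epsilon>" "\<epsilon> \<le> 1"
    and F: "F \<in> sets lebesgue" "F \<subseteq> {a..a + len}" "\<epsilon> * len \<le> measure lebesgue F"
    and small: "\<And>x. x \<in> F \<Longrightarrow> \<bar>g x\<bar> \<le> c"
    and t: "a \<le> t" "t \<le> a + len"
  defines "\<theta> \<equiv> interp_exponent (12 / \<epsilon>)"
  shows "g t \<le> (12 / \<epsilon> + 2) * c powr \<theta> * W powr (1 - \<theta>)"
  unfolding \<theta>_def
proof (rule le_powr_interpolation_of_geometric_bounds)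
  show "2 \<le> 12 / \<epsilon>" using assms by (simp add: field_simps)
  have "0 < \<epsilon> * len" using assms by simp
  hence "F \<noteq> {}" using F(3) by auto
  thus "0 \<le> c" using small by force
  show "g t \<le> (12 / \<epsilon>) ^ n * c + 2 * W / 2 ^ n" if "1 \<le> n" for n
    using remez_type_bound[OF \<open>diff 0 = g\<close> deriv bound] assms that by blast
  show "g t \<le> W" using bound[OF t, of 0] \<open>diff 0 = g\<close> by simp
qed (use assms in auto)

section \<open>A window where a nonnegative integrand is small\<close>

lemma set_integral_nonneg_on:
  fixes h :: "'a \<Rightarrow> real"
  assumes "\<And>t. t \<in> A \<Longrightarrow> 0 \<le> h t"
  shows "0 \<le> (LINT t:A|M. h t)"
  unfolding set_lebesgue_integral_def
  by (rule Bochner_Integration.integral_nonneg) (simp add: assms indicator_def)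

lemma set_integral_mono_set_nonneg:
  fixes h :: "'a \<Rightarrow> real"
  assumes "set_integrable M E h" "A \<in> sets M" "A \<subseteq> E" "\<And>t. t \<in> E \<Longrightarrow> 0 \<le> h t"
  shows "(LINT t:A|M. h t) \<le> (LINT t:E|M. h t)"
proof -
  have "set_integrable M A h" using assms(1-3) by (rule set_integrable_subset)
  thus ?thesis
    unfolding set_lebesgue_integral_def using assms
    by (intro integral_mono) (auto simp: set_integrable_def indicator_def)
qed

lemma superlevel_sets_of_set_integrable:
  fixes h :: "'a \<Rightarrow> real"
  assumes "set_integrable M A h" "A \<in> sets M"
  shows "{x\<in>A. c < h x} \<in> sets M" "{x\<in>A. c \<le> h x} \<in> sets M"
proof -
  have "(\<lambda>x. indicator A x *\<^sub>R h x) \<in> borel_measurable M"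
    using assms(1) unfolding set_integrable_def by (rule borel_measurable_integrable)
  hence "A \<inter> {x \<in> space M. c < indicator A x *\<^sub>R h x} \<in> sets M"
    "A \<inter> {x \<in> space M. c \<le> indicator A x *\<^sub>R h x} \<in> sets M"
    using assms(2) by measurable
  moreover have "{x\<in>A. c < h x} = A \<inter> {x \<in> space M. c < indicator A x *\<^sub>R h x}"
    "{x\<in>A. c \<le> h x} = A \<inter> {x \<in> space M. c \<le> indicator A x *\<^sub>R h x}"
    using sets.sets_into_space[OF assms(2)] by (auto simp: indicator_def)
  ultimately show "{x\<in>A. c < h x} \<in> sets M" "{x\<in>A. c \<le> h x} \<in> sets M" by simp_all
qed

lemma emeasure_above_twice_average_le:
  fixes h :: "real \<Rightarrow> real"
  assumes A: "A \<in> lmeasurable" "0 < measure lebesgue A"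
    and int: "set_integrable lebesgue A h" and nonneg: "\<And>t. t \<in> A \<Longrightarrow> 0 \<le> h t"
  defines "I \<equiv> LINT t:A|lebesgue. h t"
  shows "emeasure lebesgue {x\<in>A. 2 * I / measure lebesgue A < h x} \<le> ennreal (measure lebesgue A / 2)"
proof (cases "I = 0")
  case True
  have AE: "AE x in lebesgue. indicator A x *\<^sub>R h x = 0"
    using True int nonneg unfolding I_def set_lebesgue_integral_def set_integrable_def
    by (subst integral_nonneg_eq_0_iff_AE[symmetric]) (auto simp: indicator_def)
  have eq: "{x \<in> space lebesgue. \<not> indicator A x *\<^sub>R h x = 0} = {x\<in>A. 2 * I / measure lebesgue A < h x}"
    using True nonneg by (force simp: indicator_def)
  have "{x\<in>A. 2 * I / measure lebesgue A < h x} \<in> sets lebesgue"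
    using superlevel_sets_of_set_integrable[OF int] A by (simp add: fmeasurableD)
  hence "emeasure lebesgue {x\<in>A. 2 * I / measure lebesgue A < h x} = 0"
    using AE_iff_measurable[OF _ eq] AE by blast
  thus ?thesis by simp
next
  case False
  define c where "c = 2 * I / measure lebesgue A"
  have "0 \<le> I" unfolding I_def by (rule set_integral_nonneg_on[OF nonneg])
  hence "0 < I" using False by simp
  hence "0 < c" using A by (simp add: c_def)
  have "emeasure lebesgue {x\<in>A. c < h x} \<le> emeasure lebesgue {x\<in>A. c \<le> h x}"
    using superlevel_sets_of_set_integrable[OF int] A by (intro emeasure_mono) (auto simp: fmeasurableD)
  also have "\<dots> \<le> ennreal (1 / c * I)"
    by (rule integral_Markov_inequality'[OF int, folded I_def])
       (use A \<open>0 < c\<close> nonneg in \<open>auto simp: fmeasurableD\<close>)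
  also have "1 / c * I = measure lebesgue A / 2" using \<open>0 < I\<close> by (simp add: c_def)
  finally show ?thesis by (simp add: c_def)
qed

lemma exists_large_sublevel_set:
  fixes h :: "real \<Rightarrow> real"
  assumes A: "A \<in> lmeasurable" "0 < measure lebesgue A"
    and int: "set_integrable lebesgue A h" and nonneg: "\<And>t. t \<in> A \<Longrightarrow> 0 \<le> h t"
  shows "\<exists>F\<in>sets lebesgue. F \<subseteq> A \<and> measure lebesgue A / 2 \<le> measure lebesgue F \<and>
           (\<forall>t\<in>F. h t \<le> 2 * (LINT t:A|lebesgue. h t) / measure lebesgue A)"
proof -
  define m where "m = measure lebesgue A"
  define I where "I = (LINT t:A|lebesgue. h t)"
  define Bad where "Bad = {x\<in>A. 2 * I / m < h x}"
  have "Bad \<in> sets lebesgue"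
    unfolding Bad_def using superlevel_sets_of_set_integrable[OF int] A by (simp add: fmeasurableD)
  hence "Bad \<in> lmeasurable" using A by (auto intro: fmeasurableI2 simp: Bad_def)
  moreover have "emeasure lebesgue Bad \<le> ennreal (m / 2)"
    unfolding Bad_def m_def I_def by (rule emeasure_above_twice_average_le[OF A int nonneg])
  ultimately have "measure lebesgue Bad \<le> m / 2"
    using A by (simp add: emeasure_eq_measure2 m_def)
  moreover have "measure lebesgue (A - Bad) = m - measure lebesgue Bad"
    unfolding m_def
    by (rule measure_Diff) (use A \<open>Bad \<in> sets lebesgue\<close> in \<open>auto simp: Bad_def fmeasurable_def\<close>)
  moreover have "A - Bad \<in> sets lebesgue" using A \<open>Bad \<in> sets lebesgue\<close> by auto
  moreover have "\<forall>t\<in>A - Bad. h t \<le> 2 * I / m" by (auto simp: Bad_def)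
  ultimately show ?thesis unfolding m_def I_def by (intro bexI[of _ "A - Bad"]) auto
qed

lemma UN_lessThan_Suc_atLeastAtMost_uniform:
  fixes p len :: real
  assumes "0 \<le> len"
  shows "(\<Union>i<Suc N. {p + real i * len .. p + real (Suc i) * len}) = {p .. p + real (Suc N) * len}"
proof (induction N)
  case (Suc N)
  have "{p .. p + real (Suc N) * len} \<union> {p + real (Suc N) * len .. p + real (Suc (Suc N)) * len}
      = {p .. p + real (Suc (Suc N)) * len}"
    using assms by (intro ivl_disj_un_two_touch(4)) (auto simp: algebra_simps)
  thus ?case using Suc by (simp add: lessThan_Suc Un_commute)
qed (simp add: lessThan_Suc)

lemma exists_subinterval_large_measure:
  fixes E :: "real set"
  assumes "1 \<le> N" "0 \<le> len" and E: "E \<in> sets lebesgue" "E \<subseteq> {p .. p + real N * len}"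
  shows "\<exists>i<N. measure lebesgue E / N \<le> measure lebesgue (E \<inter> {p + real i * len .. p + real (Suc i) * len})"
proof (rule ccontr)
  define J where "J i = E \<inter> {p + real i * len .. p + real (Suc i) * len}" for i
  assume "\<not> ?thesis"
  hence small: "measure lebesgue (J i) < measure lebesgue E / N" if "i < N" for i
    using that by (auto simp: J_def not_le)
  obtain M where "N = Suc M" using assms by (cases N) auto
  hence "E = (\<Union>i<N. J i)"
    using UN_lessThan_Suc_atLeastAtMost_uniform[OF \<open>0 \<le> len\<close>, of p M] E by (auto simp: J_def)
  hence "measure lebesgue E = measure lebesgue (\<Union>i<N. J i)" by simp
  also have "\<dots> \<le> (\<Sum>i<N. measure lebesgue (J i))"
    by (rule measure_UNION_le) (use E in \<open>auto simp: J_def\<close>)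
  also have "\<dots> < (\<Sum>i<N. measure lebesgue E / N)"
    using small \<open>1 \<le> N\<close> by (intro sum_strict_mono) (auto simp: lessThan_empty_iff)
  also have "\<dots> = measure lebesgue E" using \<open>1 \<le> N\<close> by simp
  finally show False by simp
qed

lemma exists_subinterval_with_small_values:
  fixes E :: "real set" and h :: "real \<Rightarrow> real"
  assumes "1 \<le> N" "0 < len" and E: "E \<in> sets lebesgue" "E \<subseteq> {p .. p + real N * len}"
    and "0 < D" "D \<le> measure lebesgue E"
    and int: "set_integrable lebesgue E h" and nonneg: "\<And>t. t \<in> E \<Longrightarrow> 0 \<le> h t"
  shows "\<exists>a F. p \<le> a \<and> a + len \<le> p + real N * len \<and> F \<in> sets lebesgue \<and> F \<subseteq> E \<inter> {a..a + len}
           \<and> D / (2 * real N) \<le> measure lebesgue F \<and> (\<forall>t\<in>F. h t \<le> 2 * real N * (LINT t:E|lebesgue. h t) / D)"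
proof -
  obtain i where "i < N"
    and large: "measure lebesgue E / N \<le> measure lebesgue (E \<inter> {p + real i * len .. p + real i * len + len})"
    using exists_subinterval_large_measure[OF \<open>1 \<le> N\<close> _ E] \<open>0 < len\<close> by (auto simp: algebra_simps)
  define a where "a = p + real i * len"
  define A where "A = E \<inter> {a..a + len}"
  have "A \<in> lmeasurable"
    using E unfolding A_def by (intro bounded_set_imp_lmeasurable) (auto intro: bounded_Int)
  have "measure lebesgue E / N \<le> measure lebesgue A"
    using large by (simp add: A_def a_def)
  moreover have "D / N \<le> measure lebesgue E / N" using \<open>D \<le> measure lebesgue E\<close> by (simp add: divide_right_mono)
  ultimately have "D / N \<le> measure lebesgue A" by linarith
  moreover have "0 < D / N" using \<open>0 < D\<close> \<open>1 \<le> N\<close> by simp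
  ultimately have "0 < measure lebesgue A" by linarith
  have int_A: "set_integrable lebesgue A h"
    by (rule set_integrable_subset[OF int]) (use \<open>A \<in> lmeasurable\<close> in \<open>auto simp: A_def\<close>)
  have nonneg_A: "0 \<le> h t" if "t \<in> A" for t using nonneg that by (simp add: A_def)
  obtain F where F: "F \<in> sets lebesgue" "F \<subseteq> A" "measure lebesgue A / 2 \<le> measure lebesgue F"
    and below: "\<forall>t\<in>F. h t \<le> 2 * (LINT t:A|lebesgue. h t) / measure lebesgue A"
    using exists_large_sublevel_set[OF \<open>A \<in> lmeasurable\<close> \<open>0 < measure lebesgue A\<close> int_A nonneg_A]
    by blast
  have "(LINT t:A|lebesgue. h t) \<le> (LINT t:E|lebesgue. h t)"
    using int E(1) nonneg by (intro set_integral_mono_set_nonneg) (auto simp: A_def)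
  hence "2 * (LINT t:A|lebesgue. h t) / measure lebesgue A \<le> 2 * (LINT t:E|lebesgue. h t) / measure lebesgue A"
    using \<open>0 < measure lebesgue A\<close> by (simp add: divide_right_mono)
  also have "\<dots> \<le> 2 * (LINT t:E|lebesgue. h t) / (D / N)"
  proof (rule divide_left_mono)
    show "0 < measure lebesgue A * (D / N)" using \<open>0 < measure lebesgue A\<close> \<open>0 < D / N\<close> by (rule mult_pos_pos)
  qed (use set_integral_nonneg_on[of E h lebesgue, OF nonneg] \<open>D / N \<le> measure lebesgue A\<close> in auto)
  also have "\<dots> = 2 * real N * (LINT t:E|lebesgue. h t) / D" by simp
  finally have "\<forall>t\<in>F. h t \<le> 2 * real N * (LINT t:E|lebesgue. h t) / D" using below by fastforce
  moreover have "D / (2 * real N) \<le> measure lebesgue F" using F(3) \<open>D / N \<le> measure lebesgue A\<close> by simp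
  moreover have "a + len \<le> p + real N * len"
  proof -
    have "(real i + 1) * len \<le> real N * len"
      using \<open>i < N\<close> \<open>0 < len\<close> by (intro mult_right_mono) auto
    thus ?thesis by (simp add: a_def distrib_right)
  qed
  moreover have "p \<le> a" using \<open>0 < len\<close> by (simp add: a_def)
  ultimately show ?thesis using F(1,2) unfolding A_def by (intro exI[of _ a] exI[of _ F] conjI) auto
qed

lemma measure_Int_atLeastAtMost_lower:
  fixes E :: "real set"
  assumes E: "E \<in> sets lebesgue" "E \<subseteq> {a..b}" and "0 \<le> D"
  shows "measure lebesgue (E \<inter> {a<..<b}) - D \<le> measure lebesgue (E \<inter> {a + D..b})"
proof -
  have "E \<in> lmeasurable"
    using E by (intro bounded_set_imp_lmeasurable) (auto intro: bounded_subset[OF bounded_closed_interval])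
  have "E \<inter> {a + D..b} \<in> sets lebesgue" by (intro sets.Int E(1) sets_completionI_sets) simp
  hence "E \<inter> {a + D..b} \<in> lmeasurable" by (intro fmeasurableI2[OF \<open>E \<in> lmeasurable\<close>]) auto
  have "E \<inter> {a<..<b} \<subseteq> {a<..<a + D} \<union> (E \<inter> {a + D..b})" by auto
  hence "measure lebesgue (E \<inter> {a<..<b}) \<le> measure lebesgue ({a<..<a + D} \<union> (E \<inter> {a + D..b}))"
    by (intro measure_mono_fmeasurable) (use E(1) \<open>E \<inter> {a + D..b} \<in> lmeasurable\<close> in auto)
  also have "\<dots> \<le> D + measure lebesgue (E \<inter> {a + D..b})"
    using measure_Un_le[of "{a<..<a + D}" lebesgue] \<open>E \<inter> {a + D..b} \<in> sets lebesgue\<close> \<open>0 \<le> D\<close> by simp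
  finally show ?thesis by simp
qed

text \<open>Nothing is assumed about \<open>f 0\<close>; it does not matter because \<open>{0}\<close> is a null set.\<close>

lemma set_integrable_of_square_nn_integral_finite:
  fixes f :: "real \<Rightarrow> real"
  assumes cont: "continuous_on {0<..} f"
    and fin: "(\<integral>\<^sup>+t\<in>{0..b}. ennreal ((f t)\<^sup>2) \<partial>lborel) < \<infinity>"
    and E: "E \<in> sets lebesgue" "E \<subseteq> {0..b}" and "0 \<le> b"
  shows "set_integrable lebesgue E f"
proof -
  define f' where "f' t = indicator {0<..} t *\<^sub>R f t" for t
  have "f' \<in> borel_measurable borel"
    unfolding f'_def by (rule borel_measurable_continuous_on_indicator[OF _ cont]) simp
  hence "f' \<in> borel_measurable lborel" by simp
  hence f'_meas: "f' \<in> borel_measurable lebesgue" by (rule measurable_completion)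
  have "continuous_on {0<..b} (\<lambda>t. (f t)\<^sup>2)"
    by (intro continuous_on_power continuous_on_subset[OF cont]) auto
  hence "(\<lambda>t. indicator {0<..b} t *\<^sub>R (f t)\<^sup>2) \<in> borel_measurable borel"
    by (intro borel_measurable_continuous_on_indicator) simp_all
  hence f_sq_meas: "(\<lambda>t. ennreal (indicator {0<..b} t * (f t)\<^sup>2)) \<in> borel_measurable lborel"
    by (simp add: measurable_lborel1)
  have "ennreal (norm (indicator E t *\<^sub>R f' t)) \<le> indicator {0..b} t + ennreal (indicator {0<..b} t * (f t)\<^sup>2)"
    for t
  proof (cases "t \<in> E \<and> 0 < t")
    case True
    hence "ennreal (norm (indicator E t *\<^sub>R f' t)) \<le> ennreal (1 + (f t)\<^sup>2)"
      by (intro ennreal_leI) (simp add: f'_def abs_le_one_plus_square)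
    moreover have "t \<in> {0..b}" "t \<in> {0<..b}" using True E by auto
    ultimately show ?thesis by (simp add: ennreal_plus)
  qed (auto simp: f'_def)
  hence "(\<integral>\<^sup>+t. ennreal (norm (indicator E t *\<^sub>R f' t)) \<partial>lebesgue)
      \<le> (\<integral>\<^sup>+t. indicator {0..b} t + ennreal (indicator {0<..b} t * (f t)\<^sup>2) \<partial>lebesgue)"
    by (intro nn_integral_mono)
  also have "\<dots> = ennreal b + (\<integral>\<^sup>+t. ennreal (indicator {0<..b} t * (f t)\<^sup>2) \<partial>lborel)"
    using f_sq_meas \<open>0 \<le> b\<close> by (subst nn_integral_add) (auto simp: nn_integral_completion measurable_completion)
  also have "(\<integral>\<^sup>+t. ennreal (indicator {0<..b} t * (f t)\<^sup>2) \<partial>lborel)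
      \<le> (\<integral>\<^sup>+t\<in>{0..b}. ennreal ((f t)\<^sup>2) \<partial>lborel)"
    by (rule nn_integral_mono) (auto simp: indicator_def)
  also have "ennreal b + (\<integral>\<^sup>+t\<in>{0..b}. ennreal ((f t)\<^sup>2) \<partial>lborel) < \<infinity>"
    using fin by (simp add: ennreal_add_less_top)
  finally have int: "integrable lebesgue (\<lambda>t. indicator E t *\<^sub>R f' t)"
    using f'_meas E(1) by (intro integrableI_bounded) auto
  have "(\<lambda>t. indicator E t *\<^sub>R f t) = (\<lambda>t. indicator E t *\<^sub>R f' t + indicator (E \<inter> {0}) t *\<^sub>R f 0)"
    using E by (force simp: f'_def indicator_def fun_eq_iff)
  moreover have "E \<inter> {0} \<in> sets lebesgue" using E(1) by auto
  ultimately have "(\<lambda>t. indicator E t *\<^sub>R f t) \<in> borel_measurable lebesgue"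
    using f'_meas E(1) by simp
  moreover have "AE t in lebesgue. indicator E t *\<^sub>R f' t = indicator E t *\<^sub>R f t"
    by (rule AE_mp[OF AE_completion[OF AE_lborel_singleton[of 0]]])
       (use E in \<open>auto simp: f'_def indicator_def intro!: AE_I2\<close>)
  ultimately show ?thesis unfolding set_integrable_def by (rule integrable_cong_AE_imp[OF int])
qed

section \<open>Observed analytic semigroups\<close>

locale observed_analytic_semigroup =
  fixes S :: "real \<Rightarrow> 'x::real_normed_vector \<Rightarrow> 'x" and B :: "'x \<Rightarrow> 'u::real_normed_vector"
    and d k \<rho> K :: real
  assumes semigroup: "\<And>t s. 0 \<le> t \<Longrightarrow> 0 \<le> s \<Longrightarrow> S (t + s) = S t \<circ> S s"
    and smoothing: "\<And>t x. 0 < t \<Longrightarrow> S t x \<in> gen_dom S"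
    and admissible: "\<forall>\<tau>>0. \<exists>C\<tau>>0. \<forall>u0\<in>gen_dom S.
           (\<integral>\<^sup>+t\<in>{0..\<tau>}. ennreal ((norm (B (S t u0)))\<^sup>2) \<partial>lborel) \<le> ennreal (C\<tau> * (norm u0)\<^sup>2)"
    and dk: "d > 0" "k > 0"
    and observ: "\<forall>L\<in>{0<..1}. \<forall>u0\<in>gen_dom S.
           ennreal ((norm (S L u0))\<^sup>2)
             \<le> ennreal (exp (d / L powr k)) * (\<integral>\<^sup>+t\<in>{0..L}. ennreal ((norm (B (S t u0)))\<^sup>2) \<partial>lborel)"
    and rho: "0 < \<rho>" "\<rho> < 1"
    and K: "K \<ge> 1"
    and smooth: "\<forall>u0\<in>gen_dom S. \<forall>\<beta>::nat. \<forall>t>0.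
           ((deriv ^^ \<beta>) (\<lambda>\<tau>. (norm (B (S \<tau> u0)))\<^sup>2) has_real_derivative
              (deriv ^^ Suc \<beta>) (\<lambda>\<tau>. (norm (B (S \<tau> u0)))\<^sup>2) t) (at t)"
    and deriv_est: "\<forall>u0\<in>gen_dom S. \<forall>\<beta>::nat. \<forall>t s. 0 \<le> s \<longrightarrow> 0 < t - s \<longrightarrow> t - s \<le> 1 \<longrightarrow>
           \<bar>(deriv ^^ \<beta>) (\<lambda>\<tau>. (norm (B (S \<tau> u0)))\<^sup>2) t\<bar>
             \<le> K / (t - s)\<^sup>2 * fact \<beta> / (\<rho> * (t - s)) ^ \<beta> * (norm (S s u0))\<^sup>2"
begin

lemma observability_on_window:
  assumes "0 < a" "0 < L" "L \<le> 1"
    and G: "\<And>t. a \<le> t \<Longrightarrow> t \<le> a + L \<Longrightarrow> (norm (B (S t u)))\<^sup>2 \<le> G"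
  shows "(norm (S (a + L) u))\<^sup>2 \<le> exp (d / L powr k) * L * G"
proof -
  have "0 \<le> G" using order.trans[OF zero_le_power2 G[of a]] \<open>0 < L\<close> by simp
  have shift: "S t (S a u) = S (t + a) u" if "0 \<le> t" for t
    using semigroup[of t a] that \<open>0 < a\<close> by simp
  have "(\<integral>\<^sup>+t\<in>{0..L}. ennreal ((norm (B (S t (S a u))))\<^sup>2) \<partial>lborel)
      \<le> (\<integral>\<^sup>+t. ennreal G * indicator {0..L} t \<partial>lborel)"
    using G shift by (intro nn_integral_mono) (auto simp: indicator_def intro: ennreal_leI)
  also have "\<dots> = ennreal G * ennreal L" using \<open>0 < L\<close> by (simp add: nn_integral_cmult_indicator)
  finally have "ennreal ((norm (S L (S a u)))\<^sup>2) \<le> ennreal (exp (d / L powr k)) * (ennreal G * ennreal L)"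
    using observ smoothing[OF \<open>0 < a\<close>] assms by (meson greaterThanAtMost_iff mult_left_mono order.trans zero_le)
  also have "\<dots> = ennreal (exp (d / L powr k) * L * G)"
    using \<open>0 \<le> G\<close> \<open>0 < L\<close> by (simp add: ennreal_mult[symmetric] mult_ac)
  finally have "(norm (S L (S a u)))\<^sup>2 \<le> exp (d / L powr k) * L * G"
    using \<open>0 \<le> G\<close> \<open>0 < L\<close> by (subst (asm) ennreal_le_iff) auto
  thus ?thesis using shift[of L] \<open>0 < L\<close> by (simp add: add.commute)
qed

text \<open>Observe on \<open>[a, s]\<close> with \<open>s = a + len/2\<close> to bound \<open>S s u\<close>, transport this bound to
  \<open>[s + L, t2]\<close> by the zeroth derivative estimate with \<open>L = (t2 - s)/2\<close>, and observe again.\<close>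

lemma final_state_le_of_window_bound:
  assumes u: "u \<in> gen_dom S" and "0 < a" "0 < len" "a + len \<le> t2" "t2 - a \<le> 1"
    and G: "\<And>t. a \<le> t \<Longrightarrow> t \<le> a + len \<Longrightarrow> (norm (B (S t u)))\<^sup>2 \<le> G"
  shows "(norm (S t2 u))\<^sup>2 \<le> 2 * K * exp (2 * d / (len / 4) powr k) * G"
proof -
  define s where "s = a + len / 2"
  define L where "L = (t2 - s) / 2"
  have "len / 4 \<le> L" "L \<le> 1" "0 < L" using assms by (simp_all add: s_def L_def)
  have "s + L + L = t2" "a < s" using \<open>0 < len\<close> by (simp_all add: L_def s_def)
  have "0 \<le> G" using order.trans[OF zero_le_power2 G[of a]] \<open>0 < len\<close> by simp
  have first: "(norm (S s u))\<^sup>2 \<le> exp (d / (len / 2) powr k) * (len / 2) * G"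
    unfolding s_def using assms by (intro observability_on_window) auto
  have "(norm (B (S t u)))\<^sup>2 \<le> K / L\<^sup>2 * (norm (S s u))\<^sup>2" if "s + L \<le> t" "t \<le> s + L + L" for t
  proof -
    have "L \<le> t - s" "t - s \<le> 1" using that assms \<open>s + L + L = t2\<close> \<open>a < s\<close> by linarith+
    hence "\<bar>(deriv ^^ 0) (\<lambda>\<tau>. (norm (B (S \<tau> u)))\<^sup>2) t\<bar>
        \<le> K / (t - s)\<^sup>2 * fact 0 / (\<rho> * (t - s)) ^ 0 * (norm (S s u))\<^sup>2"
      using \<open>0 < L\<close> \<open>a < s\<close> \<open>0 < a\<close> by (intro deriv_est[rule_format, OF u]) auto
    hence "(norm (B (S t u)))\<^sup>2 \<le> K / (t - s)\<^sup>2 * (norm (S s u))\<^sup>2" by simp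
    also have "\<dots> \<le> K / L\<^sup>2 * (norm (S s u))\<^sup>2"
      using \<open>L \<le> t - s\<close> \<open>0 < L\<close> K by (intro mult_right_mono divide_left_mono power_mono) auto
    finally show ?thesis .
  qed
  hence "(norm (S (s + L + L) u))\<^sup>2 \<le> exp (d / L powr k) * L * (K / L\<^sup>2 * (norm (S s u))\<^sup>2)"
    using assms \<open>0 < L\<close> \<open>L \<le> 1\<close> by (intro observability_on_window) (auto simp: s_def)
  also have "s + L + L = t2" by fact
  also have "exp (d / L powr k) * L * (K / L\<^sup>2 * (norm (S s u))\<^sup>2)
      = exp (d / L powr k) * (K / L) * (norm (S s u))\<^sup>2"
    using \<open>0 < L\<close> by (simp add: power2_eq_square)
  also have "\<dots> \<le> exp (d / (len / 4) powr k) * (K / L) * (exp (d / (len / 4) powr k) * (len / 2) * G)"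
    using first exp_div_powr_antimono[of d k "len / 4" L] exp_div_powr_antimono[of d k "len / 4" "len / 2"]
      dk K assms \<open>len / 4 \<le> L\<close> \<open>0 < L\<close> \<open>0 \<le> G\<close>
    by (intro mult_mono order.trans[OF first] mult_right_mono) (auto simp: zero_le_mult_iff)
  also have "\<dots> = exp (2 * d / (len / 4) powr k) * K * ((len / 2) / L) * G"
    by (simp add: exp_add[symmetric] field_simps)
  also have "\<dots> \<le> exp (2 * d / (len / 4) powr k) * K * 2 * G"
    using \<open>len / 4 \<le> L\<close> \<open>0 < L\<close> K \<open>0 \<le> G\<close>
    by (intro mult_right_mono mult_left_mono) (auto simp: divide_le_eq)
  finally show ?thesis by (simp add: mult_ac)
qed

lemma isCont_sq_norm_obs:
  assumes "u \<in> gen_dom S" "0 < t"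
  shows "isCont (\<lambda>\<tau>. (norm (B (S \<tau> u)))\<^sup>2) t"
  using smooth[rule_format, OF assms(1), where \<beta> = 0, OF assms(2)] by (simp add: DERIV_isCont)

lemma set_integrable_norm_obs:
  assumes "u \<in> gen_dom S" "E \<in> sets lebesgue" "E \<subseteq> {0..b}" "0 < b"
  shows "set_integrable lebesgue E (\<lambda>t. norm (B (S t u)))"
proof (rule set_integrable_of_square_nn_integral_finite)
  have "isCont (\<lambda>t. sqrt ((norm (B (S t u)))\<^sup>2)) t" if "0 < t" for t
    using isCont_sq_norm_obs[OF assms(1) that] by (rule continuous_intros)
  thus "continuous_on {0<..} (\<lambda>t. norm (B (S t u)))"
    by (intro continuous_at_imp_continuous_on) simp
  obtain C where "(\<integral>\<^sup>+t\<in>{0..b}. ennreal ((norm (B (S t u)))\<^sup>2) \<partial>lborel) \<le> ennreal (C * (norm u)\<^sup>2)"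
    using admissible assms by blast
  thus "(\<integral>\<^sup>+t\<in>{0..b}. ennreal ((norm (B (S t u)))\<^sup>2) \<partial>lborel) < \<infinity>"
    by (simp add: order_le_less_trans)
qed (use assms in auto)

lemma deriv_sq_norm_obs_bound:
  assumes "u \<in> gen_dom S" "0 \<le> t1" "0 < D" "t1 + D \<le> t" "t - t1 \<le> 1"
  shows "\<bar>(deriv ^^ m) (\<lambda>\<tau>. (norm (B (S \<tau> u)))\<^sup>2) t\<bar>
           \<le> K * (norm (S t1 u))\<^sup>2 / D\<^sup>2 * fact m * (1 / (\<rho> * D)) ^ m"
proof -
  have "\<bar>(deriv ^^ m) (\<lambda>\<tau>. (norm (B (S \<tau> u)))\<^sup>2) t\<bar>
      \<le> K / (t - t1)\<^sup>2 * fact m / (\<rho> * (t - t1)) ^ m * (norm (S t1 u))\<^sup>2"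
    using assms by (intro deriv_est[rule_format]) auto
  also have "\<dots> = K * (norm (S t1 u))\<^sup>2 * fact m * ((1 / (t - t1)\<^sup>2) * (1 / (\<rho> * (t - t1))) ^ m)"
    by (simp add: field_simps power_divide)
  also have "\<dots> \<le> K * (norm (S t1 u))\<^sup>2 * fact m * ((1 / D\<^sup>2) * (1 / (\<rho> * D)) ^ m)"
    using assms rho K
    by (intro mult_left_mono mult_mono power_mono divide_left_mono mult_pos_pos) auto
  finally show ?thesis by simp
qed

text \<open>Discarding \<open>[t1, t1 + D]\<close> with \<open>D = \<eta> T / 2\<close> keeps measure \<open>D\<close> of \<open>E\<close>; one of \<open>N\<close>
  equal pieces of the remaining interval carries measure \<open>D / N\<close>, and Markov's inequality keeps
  half of it.\<close>

lemma exists_window_with_small_observation: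
  fixes N :: nat
  assumes "0 < \<eta>" "\<eta> < 1" "1 \<le> N"
    and T: "0 \<le> t1" "t1 < t2" "t2 - t1 \<le> 1"
    and E: "E \<in> sets lebesgue" "E \<subseteq> {t1..t2}" "\<eta> * (t2 - t1) \<le> measure lebesgue (E \<inter> {t1<..<t2})"
    and u: "u \<in> gen_dom S"
  shows "\<exists>a len F. t1 + \<eta> * (t2 - t1) / 2 \<le> a \<and> a + len \<le> t2
           \<and> (t2 - t1) / (2 * real N) \<le> len \<and> len \<le> (t2 - t1) / N
           \<and> F \<in> sets lebesgue \<and> F \<subseteq> {a..a + len} \<and> \<eta> / 4 * len \<le> measure lebesgue F
           \<and> (\<forall>x\<in>F. norm (B (S x u)) \<le> 4 * real N * (LINT t:E|lebesgue. norm (B (S t u))) / (\<eta> * (t2 - t1)))"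
proof -
  define T where "T = t2 - t1"
  define D where "D = \<eta> * T / 2"
  define len where "len = (T - D) / N"
  define E' where "E' = E \<inter> {t1 + D..t2}"
  have "0 < T" using T by (simp add: T_def)
  hence "0 < \<eta> * T" "\<eta> * T \<le> T" using \<open>0 < \<eta>\<close> \<open>\<eta> < 1\<close> by simp_all
  hence "0 < D" "len \<le> T / N" unfolding len_def D_def by (simp_all add: divide_right_mono)
  have "T / (2 * real N) = (T / 2) / N" by simp
  also have "\<dots> \<le> len" unfolding len_def D_def using \<open>\<eta> * T \<le> T\<close> by (intro divide_right_mono) auto
  finally have "T / (2 * real N) \<le> len" .
  have "t1 + D + real N * len = t2" using \<open>1 \<le> N\<close> by (simp add: len_def T_def)
  have "E' \<in> sets lebesgue" unfolding E'_def by (intro sets.Int E(1) sets_completionI_sets) simp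
  have "D \<le> measure lebesgue E'"
    using measure_Int_atLeastAtMost_lower[OF E(1,2), of D] E(3) \<open>0 < D\<close> by (simp add: E'_def D_def T_def)
  have int_E: "set_integrable lebesgue E (\<lambda>t. norm (B (S t u)))"
    using E T by (intro set_integrable_norm_obs[OF u]) auto
  hence int_E': "set_integrable lebesgue E' (\<lambda>t. norm (B (S t u)))"
    by (rule set_integrable_subset[OF _ \<open>E' \<in> sets lebesgue\<close>]) (auto simp: E'_def)
  have "E' \<subseteq> {t1 + D .. t1 + D + real N * len}"
    using \<open>t1 + D + real N * len = t2\<close> by (auto simp: E'_def)
  moreover have "0 < T / (2 * real N)" using \<open>0 < T\<close> \<open>1 \<le> N\<close> by simp
  hence "0 < len" using \<open>T / (2 * real N) \<le> len\<close> by linarith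
  ultimately have "\<exists>a F. t1 + D \<le> a \<and> a + len \<le> t1 + D + real N * len \<and> F \<in> sets lebesgue
      \<and> F \<subseteq> E' \<inter> {a..a + len} \<and> D / (2 * real N) \<le> measure lebesgue F
      \<and> (\<forall>x\<in>F. norm (B (S x u)) \<le> 2 * real N * (LINT t:E'|lebesgue. norm (B (S t u))) / D)"
    using \<open>1 \<le> N\<close> \<open>E' \<in> sets lebesgue\<close> \<open>0 < D\<close> \<open>D \<le> measure lebesgue E'\<close> int_E'
    by (intro exists_subinterval_with_small_values) simp_all
  then obtain a F where a: "t1 + D \<le> a" "a + len \<le> t2" and F: "F \<in> sets lebesgue" "F \<subseteq> E' \<inter> {a..a + len}"
    "D / (2 * real N) \<le> measure lebesgue F"
    and small: "\<forall>x\<in>F. norm (B (S x u)) \<le> 2 * real N * (LINT t:E'|lebesgue. norm (B (S t u))) / D"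
    unfolding \<open>t1 + D + real N * len = t2\<close> by blast
  have "(LINT t:E'|lebesgue. norm (B (S t u))) \<le> (LINT t:E|lebesgue. norm (B (S t u)))"
    using int_E \<open>E' \<in> sets lebesgue\<close> by (intro set_integral_mono_set_nonneg) (auto simp: E'_def)
  hence "2 * real N * (LINT t:E'|lebesgue. norm (B (S t u))) / D
      \<le> 4 * real N * (LINT t:E|lebesgue. norm (B (S t u))) / (\<eta> * (t2 - t1))"
    using \<open>0 < D\<close> by (simp add: D_def T_def divide_right_mono mult_left_mono)
  hence small': "\<forall>x\<in>F. norm (B (S x u)) \<le> 4 * real N * (LINT t:E|lebesgue. norm (B (S t u))) / (\<eta> * (t2 - t1))"
    using small by (blast intro: order_trans)
  have "\<eta> / 4 * len \<le> \<eta> / 4 * (T / N)"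
    using \<open>len \<le> T / N\<close> \<open>0 < \<eta>\<close> by (intro mult_left_mono) auto
  moreover have "\<eta> / 4 * (T / N) = D / (2 * real N)" by (simp add: D_def)
  ultimately have "\<eta> / 4 * len \<le> measure lebesgue F" using F(3) by linarith
  thus ?thesis
    using a F(1,2) small' \<open>T / (2 * real N) \<le> len\<close> \<open>len \<le> T / N\<close> unfolding D_def T_def by blast
qed

lemma sq_norm_obs_le_on_window:
  assumes u: "u \<in> gen_dom S" and "0 \<le> t1" "0 < D" "t1 + D \<le> a" "a + len \<le> t1 + 1"
    and "0 < len" "0 < \<epsilon>" "\<epsilon> \<le> 1" "len \<le> \<epsilon> * \<rho> * D / 24"
    and F: "F \<in> sets lebesgue" "F \<subseteq> {a..a + len}" "\<epsilon> * len \<le> measure lebesgue F"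
    and small: "\<forall>x\<in>F. norm (B (S x u)) \<le> lam"
    and t: "a \<le> t" "t \<le> a + len"
  defines "\<theta> \<equiv> interp_exponent (12 / \<epsilon>)"
  shows "(norm (B (S t u)))\<^sup>2
           \<le> (12 / \<epsilon> + 2) * (lam\<^sup>2) powr \<theta> * (K * (norm (S t1 u))\<^sup>2 / D\<^sup>2) powr (1 - \<theta>)"
  unfolding \<theta>_def
proof (rule propagation_of_smallness[where diff = "\<lambda>m. (deriv ^^ m) (\<lambda>\<tau>. (norm (B (S \<tau> u)))\<^sup>2)"
    and g = "\<lambda>\<tau>. (norm (B (S \<tau> u)))\<^sup>2" and R = "1 / (\<rho> * D)" and F = F])
  show "((deriv ^^ m) (\<lambda>\<tau>. (norm (B (S \<tau> u)))\<^sup>2) has_real_derivative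
      (deriv ^^ Suc m) (\<lambda>\<tau>. (norm (B (S \<tau> u)))\<^sup>2) s) (at s)" if "a \<le> s" for m s
    using smooth u assms that by simp
  show "\<bar>(deriv ^^ m) (\<lambda>\<tau>. (norm (B (S \<tau> u)))\<^sup>2) s\<bar> \<le> K * (norm (S t1 u))\<^sup>2 / D\<^sup>2 * fact m * (1 / (\<rho> * D)) ^ m"
    if "a \<le> s" "s \<le> a + len" for m s
    using deriv_sq_norm_obs_bound[OF u \<open>0 \<le> t1\<close> \<open>0 < D\<close>, of s m] that assms by simp
  show "1 / (\<rho> * D) * len \<le> \<epsilon> / 24"
    using assms rho by (simp add: field_simps)
  show "\<bar>(norm (B (S x u)))\<^sup>2\<bar> \<le> lam\<^sup>2" if "x \<in> F" for x
    using small that by (simp add: power_mono)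
qed (use assms rho K in simp_all)

lemma sq_norm_obs_bound_on_window:
  fixes N :: nat
  assumes eta: "0 < \<eta>" "\<eta> < 1" and N: "1 \<le> N" "192 / (\<rho> * \<eta>\<^sup>2) \<le> N"
    and T: "0 \<le> t1" "t1 < t2" "t2 - t1 \<le> 1"
    and E: "E \<in> sets lebesgue" "E \<subseteq> {t1..t2}" "\<eta> * (t2 - t1) \<le> measure lebesgue (E \<inter> {t1<..<t2})"
    and u: "u \<in> gen_dom S"
  defines "\<theta> \<equiv> interp_exponent (48 / \<eta>)"
  shows "\<exists>a len. 0 < a \<and> 0 < len \<and> a + len \<le> t2 \<and> t2 - a \<le> 1 \<and> (t2 - t1) / (2 * real N) \<le> len \<and>
           (\<forall>t\<in>{a..a + len}. (norm (B (S t u)))\<^sup>2 \<le> (48 / \<eta> + 2) * ((16 * (real N)\<^sup>2 + 4 * K) / (\<eta>\<^sup>2 * (t2 - t1)\<^sup>2))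
             * (((LINT t:E|lebesgue. norm (B (S t u)))\<^sup>2) powr \<theta> * ((norm (S t1 u))\<^sup>2) powr (1 - \<theta>)))"
proof -
  define T where "T = t2 - t1"
  define D where "D = \<eta> * T / 2"
  define I where "I = (LINT t:E|lebesgue. norm (B (S t u)))"
  define lam where "lam = 4 * real N * I / (\<eta> * T)"
  obtain a len F where a: "t1 + D \<le> a" "a + len \<le> t2" and len: "T / (2 * real N) \<le> len" "len \<le> T / N"
    and F: "F \<in> sets lebesgue" "F \<subseteq> {a..a + len}" "\<eta> / 4 * len \<le> measure lebesgue F"
    and small: "\<forall>x\<in>F. norm (B (S x u)) \<le> lam"
    using exists_window_with_small_observation[OF eta N(1) T E u] unfolding D_def T_def lam_def I_def by blast
  have "0 < T" using T by (simp add: T_def)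
  moreover have "0 < T / (2 * real N)" using \<open>0 < T\<close> N(1) by simp
  ultimately have "0 < D" "0 < len" using eta len by (simp_all add: D_def)
  have "len \<le> \<eta> / 4 * \<rho> * D / 24"
  proof -
    have "0 < 192 / (\<rho> * \<eta>\<^sup>2)" using rho eta by simp
    moreover have "0 < real N" using N(1) by simp
    ultimately have "1 / real N \<le> 1 / (192 / (\<rho> * \<eta>\<^sup>2))" using N(2) by (intro divide_left_mono) simp_all
    hence "T * (1 / real N) \<le> T * (\<rho> * \<eta>\<^sup>2 / 192)" using \<open>0 < T\<close> by (intro mult_left_mono) auto
    moreover have "T * (1 / real N) = T / N" by simp
    ultimately have "len \<le> T * (\<rho> * \<eta>\<^sup>2 / 192)" using len(2) by linarith
    also have "\<dots> = \<eta> / 4 * \<rho> * D / 24" by (simp add: D_def power2_eq_square)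
    finally show ?thesis .
  qed
  moreover have "2 \<le> 48 / \<eta>" using eta by (simp add: field_simps)
  hence "0 < \<theta>" "\<theta> < 1" unfolding \<theta>_def by (rule interp_exponent_bounds)+
  have interpolated: "(lam\<^sup>2) powr \<theta> * (K * (norm (S t1 u))\<^sup>2 / D\<^sup>2) powr (1 - \<theta>)
      \<le> (16 * (real N)\<^sup>2 + 4 * K) / (\<eta>\<^sup>2 * T\<^sup>2) * ((I\<^sup>2) powr \<theta> * ((norm (S t1 u))\<^sup>2) powr (1 - \<theta>))"
  proof (rule powr_interpolation_mono)
    have "lam\<^sup>2 = 16 * (real N)\<^sup>2 / (\<eta>\<^sup>2 * T\<^sup>2) * I\<^sup>2" by (simp add: lam_def power_divide power_mult_distrib)
    thus "lam\<^sup>2 \<le> (16 * (real N)\<^sup>2 + 4 * K) / (\<eta>\<^sup>2 * T\<^sup>2) * I\<^sup>2"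
      using K by (simp add: mult_right_mono divide_right_mono)
    have "K * (norm (S t1 u))\<^sup>2 / D\<^sup>2 = 4 * K / (\<eta>\<^sup>2 * T\<^sup>2) * (norm (S t1 u))\<^sup>2"
      by (simp add: D_def power_divide power_mult_distrib)
    thus "K * (norm (S t1 u))\<^sup>2 / D\<^sup>2 \<le> (16 * (real N)\<^sup>2 + 4 * K) / (\<eta>\<^sup>2 * T\<^sup>2) * (norm (S t1 u))\<^sup>2"
      by (simp add: mult_right_mono divide_right_mono)
  qed (use K \<open>0 < \<theta>\<close> \<open>\<theta> < 1\<close> in simp_all)
  have "(norm (B (S t u)))\<^sup>2 \<le> (48 / \<eta> + 2) * ((16 * (real N)\<^sup>2 + 4 * K) / (\<eta>\<^sup>2 * T\<^sup>2))
      * ((I\<^sup>2) powr \<theta> * ((norm (S t1 u))\<^sup>2) powr (1 - \<theta>))" if "a \<le> t" "t \<le> a + len" for t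
  proof -
    have "(norm (B (S t u)))\<^sup>2 \<le> (48 / \<eta> + 2) * ((lam\<^sup>2) powr \<theta> * (K * (norm (S t1 u))\<^sup>2 / D\<^sup>2) powr (1 - \<theta>))"
      using sq_norm_obs_le_on_window[OF u T(1) \<open>0 < D\<close> a(1) _ \<open>0 < len\<close> _ _ \<open>len \<le> \<eta> / 4 * \<rho> * D / 24\<close> F
          small that] a T eta by (simp add: \<theta>_def T_def mult.assoc)
    also have "\<dots> \<le> (48 / \<eta> + 2) * ((16 * (real N)\<^sup>2 + 4 * K) / (\<eta>\<^sup>2 * T\<^sup>2)
        * ((I\<^sup>2) powr \<theta> * ((norm (S t1 u))\<^sup>2) powr (1 - \<theta>)))"
      using interpolated eta by (intro mult_left_mono) auto
    finally show ?thesis by (simp add: mult.assoc)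
  qed
  moreover have "0 < a" "t2 - a \<le> 1" using a T \<open>0 < D\<close> by (simp_all add: T_def)
  ultimately show ?thesis
    using a(2) len(1) \<open>0 < len\<close> unfolding T_def I_def by (intro exI[of _ a] exI[of _ len]) auto
qed

lemma final_state_sq_le_at_scale:
  fixes N :: nat
  assumes eta: "0 < \<eta>" "\<eta> < 1" and N: "1 \<le> N" "192 / (\<rho> * \<eta>\<^sup>2) \<le> N"
    and T: "0 \<le> t1" "t1 < t2" "t2 - t1 \<le> 1"
    and E: "E \<in> sets lebesgue" "E \<subseteq> {t1..t2}" "\<eta> * (t2 - t1) \<le> measure lebesgue (E \<inter> {t1<..<t2})"
    and u: "u \<in> gen_dom S"
  defines "\<theta> \<equiv> interp_exponent (48 / \<eta>)"
  shows "(norm (S t2 u))\<^sup>2 \<le> 2 * K * exp (2 * d * (8 * real N) powr k / (t2 - t1) powr k)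
           * ((48 / \<eta> + 2) * ((16 * (real N)\<^sup>2 + 4 * K) / (\<eta>\<^sup>2 * (t2 - t1)\<^sup>2))
           * (((LINT t:E|lebesgue. norm (B (S t u)))\<^sup>2) powr \<theta> * ((norm (S t1 u))\<^sup>2) powr (1 - \<theta>)))"
    (is "_ \<le> 2 * K * exp (?Q / _) * ?G")
proof -
  obtain a len where a: "0 < a" "a + len \<le> t2" "t2 - a \<le> 1" and len: "0 < len" "(t2 - t1) / (2 * real N) \<le> len"
    and window: "\<forall>t\<in>{a..a + len}. (norm (B (S t u)))\<^sup>2 \<le> ?G"
    using sq_norm_obs_bound_on_window[OF eta N T E u] unfolding \<theta>_def by blast
  have "(t2 - t1) / (8 * real N) = (t2 - t1) / (2 * real N) / 4" by simp
  hence "(t2 - t1) / (8 * real N) \<le> len / 4" using len(2) by linarith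
  have "(norm (S t2 u))\<^sup>2 \<le> 2 * K * exp (2 * d / (len / 4) powr k) * ?G"
    using window by (intro final_state_le_of_window_bound[OF u a(1) len(1) a(2,3)]) auto
  also have "\<dots> \<le> 2 * K * exp (2 * d / ((t2 - t1) / (8 * real N)) powr k) * ?G"
    using dk T N(1) \<open>(t2 - t1) / (8 * real N) \<le> len / 4\<close> K eta
    by (intro mult_right_mono mult_left_mono exp_div_powr_antimono) auto
  also have "2 * d / ((t2 - t1) / (8 * real N)) powr k = ?Q / (t2 - t1) powr k"
    by (simp add: powr_divide)
  finally show ?thesis .
qed

lemma final_state_estimate:
  assumes "0 < \<eta>" "\<eta> < 1"
  defines "\<theta> \<equiv> interp_exponent (48 / \<eta>)"
  shows "\<exists>P Q. \<forall>t1 t2 E u. 0 \<le> t1 \<longrightarrow> t1 < t2 \<longrightarrow> t2 - t1 \<le> 1 \<longrightarrow>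
           E \<in> sets lebesgue \<longrightarrow> E \<subseteq> {t1..t2} \<longrightarrow>
           \<eta> * (t2 - t1) \<le> measure lebesgue (E \<inter> {t1<..<t2}) \<longrightarrow> u \<in> gen_dom S \<longrightarrow>
           (norm (S t2 u))\<^sup>2 \<le> P * exp (Q / (t2 - t1) powr k)
             * ((LINT t:E|lebesgue. norm (B (S t u)))\<^sup>2) powr \<theta> * ((norm (S t1 u))\<^sup>2) powr (1 - \<theta>)"
proof (intro exI allI impI)
  \<comment> \<open>makes the window length at most \<open>\<eta> \<rho> D / 96\<close>, the Taylor radius needed for the Remez step\<close>
  define N where "N = nat \<lceil>192 / (\<rho> * \<eta>\<^sup>2)\<rceil>"
  have N: "192 / (\<rho> * \<eta>\<^sup>2) \<le> N" unfolding N_def by linarith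
  moreover have "0 < 192 / (\<rho> * \<eta>\<^sup>2)" using assms rho by simp
  ultimately have "1 \<le> N" by linarith
  fix t1 t2 E u
  assume T: "0 \<le> t1" "t1 < t2" "t2 - t1 \<le> 1"
    and E: "E \<in> sets lebesgue" "E \<subseteq> {t1..t2}" "\<eta> * (t2 - t1) \<le> measure lebesgue (E \<inter> {t1<..<t2})"
    and u: "u \<in> gen_dom S"
  define T' where "T' = t2 - t1"
  define X where "X = ((LINT t:E|lebesgue. norm (B (S t u)))\<^sup>2) powr \<theta> * ((norm (S t1 u))\<^sup>2) powr (1 - \<theta>)"
  define c where "c = 2 * K * (48 / \<eta> + 2) * ((16 * (real N)\<^sup>2 + 4 * K) / \<eta>\<^sup>2)"
  have "0 < T'" using T by (simp add: T'_def)
  have "0 \<le> c" using assms K by (simp add: c_def)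
  have "(norm (S t2 u))\<^sup>2 \<le> c * (1 / T'\<^sup>2) * exp (2 * d * (8 * real N) powr k / T' powr k) * X"
    using final_state_sq_le_at_scale[OF assms(1,2) \<open>1 \<le> N\<close> N T E u]
    by (simp add: c_def X_def T'_def \<theta>_def field_simps)
  also have "\<dots> \<le> c * ((1 + fact (nat \<lceil>2 / k\<rceil>)) * exp (1 / T' powr k)) * exp (2 * d * (8 * real N) powr k / T' powr k) * X"
    using inverse_square_le_exp[OF \<open>0 < T'\<close> dk(2)] \<open>0 \<le> c\<close>
    by (intro mult_right_mono mult_left_mono) (auto simp: X_def)
  also have "\<dots> = c * (1 + fact (nat \<lceil>2 / k\<rceil>)) * exp ((2 * d * (8 * real N) powr k + 1) / T' powr k) * X"
    by (simp add: exp_add[symmetric] add_divide_distrib)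
  finally show "(norm (S t2 u))\<^sup>2 \<le> c * (1 + fact (nat \<lceil>2 / k\<rceil>)) * exp ((2 * d * (8 * real N) powr k + 1) / (t2 - t1) powr k)
      * ((LINT t:E|lebesgue. norm (B (S t u)))\<^sup>2) powr \<theta> * ((norm (S t1 u))\<^sup>2) powr (1 - \<theta>)"
    by (simp add: X_def T'_def mult.assoc)
qed

lemma final_state_interpolation:
  assumes "0 < \<eta>" "\<eta> < 1"
  shows "\<exists>C>0. \<exists>\<theta>. 0 < \<theta> \<and> \<theta> < 1 \<and>
           (\<forall>t1 t2 E u. 0 \<le> t1 \<longrightarrow> t1 < t2 \<longrightarrow> t2 - t1 \<le> 1 \<longrightarrow>
              E \<in> sets lebesgue \<longrightarrow> E \<subseteq> {t1..t2} \<longrightarrow>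
              \<eta> * (t2 - t1) \<le> measure lebesgue (E \<inter> {t1<..<t2}) \<longrightarrow> u \<in> gen_dom S \<longrightarrow>
              norm (S t2 u) \<le> (C * exp (C / (t2 - t1) powr k) * (LINT t:E|lebesgue. norm (B (S t u)))) powr \<theta>
                * norm (S t1 u) powr (1 - \<theta>))"
proof -
  define \<theta> where "\<theta> = interp_exponent (48 / \<eta>)"
  have "2 \<le> 48 / \<eta>" using assms by (simp add: field_simps)
  hence "0 < \<theta>" "\<theta> < 1" unfolding \<theta>_def by (rule interp_exponent_bounds)+
  obtain P Q where estimate: "\<forall>t1 t2 E u. 0 \<le> t1 \<longrightarrow> t1 < t2 \<longrightarrow> t2 - t1 \<le> 1 \<longrightarrow>
      E \<in> sets lebesgue \<longrightarrow> E \<subseteq> {t1..t2} \<longrightarrow>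
      \<eta> * (t2 - t1) \<le> measure lebesgue (E \<inter> {t1<..<t2}) \<longrightarrow> u \<in> gen_dom S \<longrightarrow>
      (norm (S t2 u))\<^sup>2 \<le> P * exp (Q / (t2 - t1) powr k)
        * ((LINT t:E|lebesgue. norm (B (S t u)))\<^sup>2) powr \<theta> * ((norm (S t1 u))\<^sup>2) powr (1 - \<theta>)"
    using final_state_estimate[OF assms] unfolding \<theta>_def by blast
  obtain C where C: "0 < C" "P \<le> (C\<^sup>2) powr \<theta>" "Q \<le> 2 * \<theta> * C"
    using exists_absorbing_constant[OF \<open>0 < \<theta>\<close>] by blast
  have "norm (S t2 u) \<le> (C * exp (C / (t2 - t1) powr k) * (LINT t:E|lebesgue. norm (B (S t u)))) powr \<theta>
      * norm (S t1 u) powr (1 - \<theta>)"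
    if "0 \<le> t1" "t1 < t2" "t2 - t1 \<le> 1" "E \<in> sets lebesgue" "E \<subseteq> {t1..t2}"
      "\<eta> * (t2 - t1) \<le> measure lebesgue (E \<inter> {t1<..<t2})" "u \<in> gen_dom S" for t1 t2 E u
    using estimate that C
    by (intro le_powr_form_of_square_le[where P = P and Q = Q]) (auto intro: set_integral_nonneg_on)
  thus ?thesis using \<open>0 < C\<close> \<open>0 < \<theta>\<close> \<open>\<theta> < 1\<close> by (intro exI[of _ C] conjI exI[of _ \<theta>]) auto
qed

end

theorem lemma2p3:
  fixes S :: "real \<Rightarrow> 'x::{real_inner, complete_space} \<Rightarrow> 'x"
    and B :: "'x \<Rightarrow> 'u::{real_inner, complete_space}"
    and d k \<rho> K :: real
  assumes analytic: "analytic_semigroup S"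
    and B_bdd: "bounded_on_graph S B"
    and admissible: "\<forall>\<tau>>0. \<exists>C\<tau>>0. \<forall>u0\<in>gen_dom S.
           (\<integral>\<^sup>+t\<in>{0..\<tau>}. ennreal ((norm (B (S t u0)))\<^sup>2) \<partial>lborel) \<le> ennreal (C\<tau> * (norm u0)\<^sup>2)"
    and dk: "d > 0" "k > 0"
    and observ: "\<forall>L\<in>{0<..1}. \<forall>u0\<in>gen_dom S.
           ennreal ((norm (S L u0))\<^sup>2)
             \<le> ennreal (exp (d / L powr k)) * (\<integral>\<^sup>+t\<in>{0..L}. ennreal ((norm (B (S t u0)))\<^sup>2) \<partial>lborel)"
    and rho: "0 < \<rho>" "\<rho> < 1"
    and K: "K \<ge> 1"
    and smooth: "\<forall>u0\<in>gen_dom S. \<forall>\<beta>::nat. \<forall>t>0.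
           ((deriv ^^ \<beta>) (\<lambda>\<tau>. (norm (B (S \<tau> u0)))\<^sup>2) has_real_derivative
              (deriv ^^ Suc \<beta>) (\<lambda>\<tau>. (norm (B (S \<tau> u0)))\<^sup>2) t) (at t)"
    and deriv_est: "\<forall>u0\<in>gen_dom S. \<forall>\<beta>::nat. \<forall>t s. 0 \<le> s \<longrightarrow> 0 < t - s \<longrightarrow> t - s \<le> 1 \<longrightarrow>
           \<bar>(deriv ^^ \<beta>) (\<lambda>\<tau>. (norm (B (S \<tau> u0)))\<^sup>2) t\<bar>
             \<le> K / (t - s)\<^sup>2 * fact \<beta> / (\<rho> * (t - s)) ^ \<beta> * (norm (S s u0))\<^sup>2"
  shows "\<forall>\<eta>. 0 < \<eta> \<and> \<eta> < 1 \<longrightarrow>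
           (\<exists>C>0. \<exists>\<theta>. 0 < \<theta> \<and> \<theta> < 1 \<and>
             (\<forall>t1 t2 E u0. 0 \<le> t1 \<longrightarrow> t1 < t2 \<longrightarrow> t2 - t1 \<le> 1 \<longrightarrow>
                E \<in> sets lebesgue \<longrightarrow> E \<subseteq> {t1..t2} \<longrightarrow> measure lebesgue E > 0 \<longrightarrow>
                measure lebesgue (E \<inter> {t1<..<t2}) \<ge> \<eta> * (t2 - t1) \<longrightarrow>
                u0 \<in> gen_dom S \<longrightarrow>
                norm (S t2 u0)
                  \<le> (C * exp (C / (t2 - t1) powr k) * (LINT t:E|lebesgue. norm (B (S t u0)))) powr \<theta>
                    * norm (S t1 u0) powr (1 - \<theta>)))"
proof -
  interpret observed_analytic_semigroup S B d k \<rho> K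
    using analytic admissible dk observ rho K smooth deriv_est
    by unfold_locales (auto simp: analytic_semigroup_def C0_semigroup_def)
  show ?thesis using final_state_interpolation by (simp add: imp_conjL) meson
qed

end
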